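(* Consider a multi-agent system of $n$ agents described as rigid bodies with poses given by unit dual quaternions $\underline{\boldsymbol{x}}_i=\boldsymbol{r}_i+\varepsilon\frac{1}{2}\boldsymbol{p}_i\boldsymbol{r}_i$. Let the dynamics of each agent be $\operatorname{vec}_{8}\underline{\boldsymbol{u}}_{x,i}\triangleq\operatorname{vec}_{8}\dot{\underline{\boldsymbol{x}}}_{i}$, $i=1,\ldots,n$, and each agent's output be $\underline{\boldsymbol{y}}_{c,i}\triangleq\log(\underline{\boldsymbol{x}}_{c,i})=\log(\underline{\boldsymbol{x}}_{i}\underline{\boldsymbol{\delta}}_{i}^{*})$, where $\underline{\boldsymbol{\delta}}_{i}$ is the constant, locally known desired pose of agent $i$ relative to the center of formation. With the consensus protocol \[ \operatorname{vec}_{8}\underline{\boldsymbol{u}}_{x,i}=-\overset{-}{\boldsymbol{H}}_{8}(\underline{\boldsymbol{\delta}}_{i})\boldsymbol{Q}_{8}(\underline{\boldsymbol{x}}_{c,i})\sum_{j=1}^{n}a_{ij}\operatorname{vec}_{6}\left(\underline{\boldsymbol{y}}_{c,i}-\underline{\boldsymbol{y}}_{c,j}\right), \] the multi-agent system asymptotically achieves formation (i.e., all $\underline{\boldsymbol{x}}_{c,i}$ converge to a common $\underline{\boldsymbol{x}}_c$, so that $\underline{\boldsymbol{x}}_i\to\underline{\boldsymbol{x}}_c\underline{\boldsymbol{\delta}}_i$) if and only if the directed graph $\mathcal{G}$ has a directed spanning tree.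
   Context: Quaternions $\boldsymbol{h}=h_{1}+\hat{\imath}h_{2}+\hat{\jmath}h_{3}+\hat{k}h_{4}$, dual quaternions $\underline{\boldsymbol{h}}=\boldsymbol{h}+\varepsilon\boldsymbol{h}'$ ($\varepsilon^2=0$), conjugate $\underline{\boldsymbol{h}}^*=\mathrm{Re}(\underline{\boldsymbol{h}})-\mathrm{Im}(\underline{\boldsymbol{h}})$; unit dual quaternions $\underline{\boldsymbol{x}}=\boldsymbol{r}+\varepsilon\frac12\boldsymbol{p}\boldsymbol{r}$ with $\boldsymbol{r}=\cos(\phi/2)+\boldsymbol{n}\sin(\phi/2)$, $\phi\in[0,2\pi)$, have $\log\underline{\boldsymbol{x}}=\frac12(\phi\boldsymbol{n}+\varepsilon\boldsymbol{p})$. $\operatorname{vec}_4,\operatorname{vec}_8$ stack coefficients into $\mathbb{R}^4,\mathbb{R}^8$; $\operatorname{vec}_3,\operatorname{vec}_6$ stack imaginary coefficients of pure quaternions/pure dual quaternions. The Hamilton operators satisfy $\operatorname{vec}_8(\underline{\boldsymbol{h}}_1\underline{\boldsymbol{h}}_2)=\overset{+}{\boldsymbol{H}}_8(\underline{\boldsymbol{h}}_1)\operatorname{vec}_8\underline{\boldsymbol{h}}_2=\overset{-}{\boldsymbol{H}}_8(\underline{\boldsymbol{h}}_2)\operatorname{vec}_8\underline{\boldsymbol{h}}_1$, with $\overset{-}{\boldsymbol{H}}_{8}(\underline{\boldsymbol{h}})=\begin{bmatrix}\overset{-}{\boldsymbol{H}}_{4}(\boldsymbol{h}) & \boldsymbol{0}_{4\times4}\\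 \overset{-}{\boldsymbol{H}}_{4}(\boldsymbol{h}') & \overset{-}{\boldsymbol{H}}_{4}(\boldsymbol{h})\end{bmatrix}$, and analogously for $+$, where $\overset{\pm}{\boldsymbol{H}}_4$ are the $4\times4$ quaternion Hamilton operators with $\operatorname{vec}_4(\boldsymbol{h}_1\boldsymbol{h}_2)=\overset{+}{\boldsymbol{H}}_4(\boldsymbol{h}_1)\operatorname{vec}_4\boldsymbol{h}_2=\overset{-}{\boldsymbol{H}}_4(\boldsymbol{h}_2)\operatorname{vec}_4\boldsymbol{h}_1$. For a unit dual quaternion $\underline{\boldsymbol{x}}=\boldsymbol{r}+\varepsilon\frac12\boldsymbol{p}\boldsymbol{r}$, $\boldsymbol{Q}_{8}(\underline{\boldsymbol{x}})=\begin{bmatrix}\boldsymbol{Q}(\boldsymbol{r}) & \boldsymbol{0}_{4\times3}\\ \frac{1}{2}\overset{+}{\boldsymbol{H}}_{4}(\boldsymbol{p})\boldsymbol{Q}(\boldsymbol{r}) & \overset{-}{\boldsymbol{H}}_{4}(\boldsymbol{r})\begin{bmatrix}\boldsymbol{0}_{1\times3}\\ \boldsymbol{I}_3\end{bmatrix}\end{bmatrix}$, with $\boldsymbol{Q}(\boldsymbol{r})=\partial\operatorname{vec}_4\boldsymbol{r}/\partial\operatorname{vec}_3\log\boldsymbol{r}$; it is full column rank and satisfies $\operatorname{vec}_8\dot{\underline{\boldsymbol{x}}}=\boldsymbol{Q}_8(\underline{\boldsymbol{x}})\operatorname{vec}_6\frac{d}{dt}\log\underline{\boldsymbol{x}}$.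 $a_{ij}$ are the adjacency-matrix entries of the weighted directed graph $\mathcal{G}$ ($a_{ij}>0$ iff agent $i$ receives information from agent $j$, $a_{ii}=0$). *)

theory Defs
  imports "HOL-Analysis.Analysis"
begin

text \<open>h = h1 + i h2 + j h3 + k h4 is represented by (vector [h1,h2,h3,h4] :: real^4),
  i.e. we identify a quaternion with vec_4 of it.  Pure quaternions are identified with
  vec_3 of them (real^3).\<close>

definition qmult :: "real^4 \<Rightarrow> real^4 \<Rightarrow> real^4" where
  "qmult a b = vector
     [a$1*b$1 - a$2*b$2 - a$3*b$3 - a$4*b$4,
      a$1*b$2 + a$2*b$1 + a$3*b$4 - a$4*b$3,
      a$1*b$3 - a$2*b$4 + a$3*b$1 + a$4*b$2,
      a$1*b$4 + a$2*b$3 - a$3*b$2 + a$4*b$1]"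

definition qconj :: "real^4 \<Rightarrow> real^4" where
  "qconj h = vector [h$1, - h$2, - h$3, - h$4]"

definition qone :: "real^4" where
  "qone = vector [1, 0, 0, 0]"

text \<open>vec_3 of the imaginary part, and the embedding [0_{1x3}; I_3] of real^3 into real^4\<close>
definition qim3 :: "real^4 \<Rightarrow> real^3" where
  "qim3 h = vector [h$2, h$3, h$4]"

definition pure4 :: "real^3 \<Rightarrow> real^4" where
  "pure4 v = vector [0, v$1, v$2, v$3]"

text \<open>Hamilton operators, as the linear maps given by the 4x4 matrices:
  H4plus h applied to vec_4 g is vec_4 (h g); H4minus h applied to vec_4 g is vec_4 (g h).\<close>
definition H4plus :: "real^4 \<Rightarrow> real^4 \<Rightarrow> real^4" where
  "H4plus h g = qmult h g"

definition H4minus :: "real^4 \<Rightarrow> real^4 \<Rightarrow> real^4" where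
  "H4minus h g = qmult g h"

definition qexp3 :: "real^3 \<Rightarrow> real^4" where
  "qexp3 w = (let s = (if w = 0 then 1 else sin (norm w) / norm w)
              in vector [cos (norm w), s * w$1, s * w$2, s * w$3])"

text \<open>vec_3 log r for a unit quaternion r = cos(phi/2) + n sin(phi/2), phi in [0,2pi):
  log r = phi n / 2.  (phi/2 = arccos r1; n = Im r / |Im r|; log 1 = 0.)\<close>
definition qlog3 :: "real^4 \<Rightarrow> real^3" where
  "qlog3 r = (if qim3 r = 0 then 0 else (arccos (r$1) / norm (qim3 r)) *\<^sub>R qim3 r)"

text \<open>Q(r) = d vec_4 r / d vec_3 log r, as a linear map real^3 to real^4
  (the Jacobian of r = exp(log r) with respect to vec_3 log r).\<close>
definition Qmat :: "real^4 \<Rightarrow> real^3 \<Rightarrow> real^4" where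
  "Qmat r = frechet_derivative qexp3 (at (qlog3 r))"

section \<open>Dual quaternions h + eps h', represented by (vec_4 h, vec_4 h') = vec_8\<close>

type_synonym dq = "(real^4) \<times> (real^4)"

definition dq_mult :: "dq \<Rightarrow> dq \<Rightarrow> dq" where
  "dq_mult x y = (qmult (fst x) (fst y), qmult (fst x) (snd y) + qmult (snd x) (fst y))"

definition dq_conj :: "dq \<Rightarrow> dq" where
  "dq_conj x = (qconj (fst x), qconj (snd x))"

definition unit_dq :: "dq \<Rightarrow> bool" where
  "unit_dq x \<longleftrightarrow> dq_mult x (dq_conj x) = (qone, 0)"

text \<open>vec_6 log x for x = r + eps (1/2) p r: log x = (1/2)(phi n + eps p), where
  (1/2) p = x' r^*.\<close>
definition dq_log6 :: "dq \<Rightarrow> (real^3) \<times> (real^3)" where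
  "dq_log6 x = (qlog3 (fst x), qim3 (qmult (snd x) (qconj (fst x))))"

text \<open>H8minus as the linear map given by the block matrix [H4-(h), 0; H4-(h'), H4-(h)].\<close>
definition H8minus :: "dq \<Rightarrow> dq \<Rightarrow> dq" where
  "H8minus h v = (H4minus (fst h) (fst v),
                  H4minus (snd h) (fst v) + H4minus (fst h) (snd v))"

text \<open>Q_8(x) for x = r + eps (1/2) p r, as the linear map of the block matrix
  [Q(r), 0; (1/2) H4+(p) Q(r), H4-(r) [0;I_3]].\<close>
definition Q8 :: "dq \<Rightarrow> (real^3) \<times> (real^3) \<Rightarrow> dq" where
  "Q8 x v = (let r = fst x; p = 2 *\<^sub>R qmult (snd x) (qconj r)
             in (Qmat r (fst v),
                 (1/2) *\<^sub>R H4plus p (Qmat r (fst v)) + H4minus r (pure4 (snd v))))"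

definition xc :: "('n \<Rightarrow> dq) \<Rightarrow> ('n \<Rightarrow> real \<Rightarrow> dq) \<Rightarrow> 'n \<Rightarrow> real \<Rightarrow> dq" where
  "xc \<delta> x i t = dq_mult (x i t) (dq_conj (\<delta> i))"

definition yc :: "('n \<Rightarrow> dq) \<Rightarrow> ('n \<Rightarrow> real \<Rightarrow> dq) \<Rightarrow> 'n \<Rightarrow> real \<Rightarrow> (real^3) \<times> (real^3)" where
  "yc \<delta> x i t = dq_log6 (xc \<delta> x i t)"

definition protocol ::
  "('n::finite \<Rightarrow> 'n \<Rightarrow> real) \<Rightarrow> ('n \<Rightarrow> dq) \<Rightarrow> ('n \<Rightarrow> real \<Rightarrow> dq) \<Rightarrow> 'n \<Rightarrow> real \<Rightarrow> dq" where
  "protocol a \<delta> x i t =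
     - H8minus (\<delta> i) (Q8 (xc \<delta> x i t) (\<Sum>j\<in>UNIV. a i j *\<^sub>R (yc \<delta> x i t - yc \<delta> x j t)))"

text \<open>x is a (forward, t \<ge> 0) trajectory of the closed-loop system: the poses are unit
  dual quaternions, the output log (x_i delta_i^* ) is defined (primary part \<noteq> -1,
  since phi ranges over [0,2pi)), and vec_8 dx_i/dt = vec_8 u_{x,i}.\<close>
definition closed_loop_solution ::
  "('n::finite \<Rightarrow> 'n \<Rightarrow> real) \<Rightarrow> ('n \<Rightarrow> dq) \<Rightarrow> ('n \<Rightarrow> real \<Rightarrow> dq) \<Rightarrow> bool" where
  "closed_loop_solution a \<delta> x \<longleftrightarrow>
     (\<forall>i t. 0 \<le> t \<longrightarrow>
        unit_dq (x i t) \<and>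
        fst (xc \<delta> x i t) \<noteq> - qone \<and>
        (x i has_vector_derivative protocol a \<delta> x i t) (at t within {0..}))"

definition achieves_formation ::
  "('n::finite \<Rightarrow> 'n \<Rightarrow> real) \<Rightarrow> ('n \<Rightarrow> dq) \<Rightarrow> bool" where
  "achieves_formation a \<delta> \<longleftrightarrow>
     (\<forall>x. closed_loop_solution a \<delta> x \<longrightarrow>
        (\<exists>L. \<forall>i. ((\<lambda>t. xc \<delta> x i t) \<longlongrightarrow> L) at_top))"

text \<open>Graph G: arc j \<rightarrow> i iff a i j > 0.  A directed spanning tree is a rooted out-tree on
  all vertices using arcs of G: a root k and a parent map par with an arc par i \<rightarrow> i for every
  i \<noteq> k, such that following parents from any vertex reaches the root (no cycles).\<close>
definition has_directed_spanning_tree :: "('n \<Rightarrow> 'n \<Rightarrow> real) \<Rightarrow> bool" where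
  "has_directed_spanning_tree a \<longleftrightarrow>
     (\<exists>k par. (\<forall>i. i \<noteq> k \<longrightarrow> a i (par i) > 0) \<and> (\<forall>i. \<exists>m. (par ^^ m) i = k))"

end

theory Submission
  imports Defs
begin

text \<open>Write \<open>y\<^sub>i = log x\<^sub>c\<^sub>,\<^sub>i\<close>.  The protocol is built from \<open>Q\<^sub>8\<close>, the differential of the
  exponential at the logarithm, so along every closed-loop trajectory the outputs obey the linear
  consensus dynamics \<open>y\<^sub>i' = - \<Sum>\<^sub>j a\<^sub>i\<^sub>j (y\<^sub>i - y\<^sub>j)\<close>, coordinatewise.  For these dynamics the
  maximum of a coordinate never increases and the minimum never decreases.  If there is a directed
  spanning tree, its root pulls every vertex away from one of the two extremes within a fixed time
  (the height of the tree), so the spread contracts geometrically and all outputs converge to a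
  common limit; hence so do the poses \<open>x\<^sub>c\<^sub>,\<^sub>i = exp y\<^sub>i\<close>.  Without a spanning tree there are two
  disjoint nonempty vertex sets that receive no information from outside; a Brouwer fixed point
  gives an equilibrium of the consensus dynamics that is \<open>0\<close> on one and \<open>1\<close> on the other, and the
  corresponding translations at rest form a closed-loop trajectory that never reaches formation.\<close>

section \<open>Quaternion algebra in coordinates\<close>

lemma vector_4 [simp]:
  "(vector [x, y, z, w] :: ('a::zero)^4) $ 1 = x"
  "(vector [x, y, z, w] :: ('a::zero)^4) $ 2 = y"
  "(vector [x, y, z, w] :: ('a::zero)^4) $ 3 = z"
  "(vector [x, y, z, w] :: ('a::zero)^4) $ 4 = w"
  unfolding vector_def by simp_all

lemma vec4_eq_iff: "(x::real^4) = y \<longleftrightarrow> x$1 = y$1 \<and> x$2 = y$2 \<and> x$3 = y$3 \<and> x$4 = y$4"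
  by (auto simp: vec_eq_iff forall_4)

lemma vec3_eq_iff: "(x::real^3) = y \<longleftrightarrow> x$1 = y$1 \<and> x$2 = y$2 \<and> x$3 = y$3"
  by (auto simp: vec_eq_iff forall_3)

lemma qmult_nth [simp]:
  "qmult a b $ 1 = a$1*b$1 - a$2*b$2 - a$3*b$3 - a$4*b$4"
  "qmult a b $ 2 = a$1*b$2 + a$2*b$1 + a$3*b$4 - a$4*b$3"
  "qmult a b $ 3 = a$1*b$3 - a$2*b$4 + a$3*b$1 + a$4*b$2"
  "qmult a b $ 4 = a$1*b$4 + a$2*b$3 - a$3*b$2 + a$4*b$1"
  by (simp_all add: qmult_def)

lemma qconj_nth [simp]:
  "qconj h $ 1 = h$1" "qconj h $ 2 = - h$2" "qconj h $ 3 = - h$3" "qconj h $ 4 = - h$4"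
  by (simp_all add: qconj_def)

lemma qone_nth [simp]: "qone $ 1 = 1" "qone $ 2 = 0" "qone $ 3 = 0" "qone $ 4 = 0"
  by (simp_all add: qone_def)

lemma pure4_nth [simp]:
  "pure4 v $ 1 = 0" "pure4 v $ 2 = v$1" "pure4 v $ 3 = v$2" "pure4 v $ 4 = v$3"
  by (simp_all add: pure4_def)

lemma qim3_nth [simp]: "qim3 h $ 1 = h$2" "qim3 h $ 2 = h$3" "qim3 h $ 3 = h$4"
  by (simp_all add: qim3_def)

lemma qim3_pure4 [simp]: "qim3 (pure4 v) = v"
  by (simp add: vec3_eq_iff)

lemma pure4_qim3: "h$1 = 0 \<Longrightarrow> pure4 (qim3 h) = h"
  by (simp add: vec4_eq_iff)

lemma power2_norm_vec4: "(norm (x::real^4))^2 = x$1^2 + x$2^2 + x$3^2 + x$4^2"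
  unfolding power2_norm_eq_inner inner_vec_def sum_4 by (simp add: power2_eq_square)

lemma power2_norm_vec3: "(norm (x::real^3))^2 = x$1^2 + x$2^2 + x$3^2"
  unfolding power2_norm_eq_inner inner_vec_def sum_3 by (simp add: power2_eq_square)

lemma qmult_assoc: "qmult (qmult a b) c = qmult a (qmult b c)"
  by (simp add: vec4_eq_iff algebra_simps)

lemma qmult_add_left: "qmult (a + b) c = qmult a c + qmult b c"
  by (simp add: vec4_eq_iff algebra_simps)

lemma qmult_add_right: "qmult a (b + c) = qmult a b + qmult a c"
  by (simp add: vec4_eq_iff algebra_simps)

lemma qmult_scaleR_left: "qmult (r *\<^sub>R a) c = r *\<^sub>R qmult a c"
  by (simp add: vec4_eq_iff algebra_simps)

lemma qmult_scaleR_right: "qmult a (r *\<^sub>R c) = r *\<^sub>R qmult a c"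
  by (simp add: vec4_eq_iff algebra_simps)

lemma qmult_zero [simp]: "qmult 0 a = 0" "qmult a 0 = 0"
  by (simp_all add: vec4_eq_iff)

lemma qmult_one [simp]: "qmult qone a = a" "qmult a qone = a"
  by (simp_all add: vec4_eq_iff)

lemma qconj_qmult: "qconj (qmult a b) = qmult (qconj b) (qconj a)"
  by (simp add: vec4_eq_iff algebra_simps)

lemma qconj_qconj [simp]: "qconj (qconj a) = a"
  by (simp add: vec4_eq_iff)

lemma qmult_qconj_self: "qmult a (qconj a) = (norm a)^2 *\<^sub>R qone"
  unfolding vec4_eq_iff power2_norm_vec4 by (simp add: power2_eq_square)

lemma qmult_qconj_self_left: "qmult (qconj a) a = (norm a)^2 *\<^sub>R qone"
  unfolding vec4_eq_iff power2_norm_vec4 by (simp add: power2_eq_square)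

lemma bounded_bilinear_qmult: "bounded_bilinear qmult"
proof -
  have "bilinear qmult"
    unfolding bilinear_def
    by (auto simp: linear_iff qmult_add_left qmult_add_right qmult_scaleR_left qmult_scaleR_right)
  then show ?thesis by (rule bilinear_conv_bounded_bilinear[THEN iffD1])
qed

lemma bounded_linear_qconj: "bounded_linear qconj"
  by (rule linear_conv_bounded_linear[THEN iffD1]) (simp add: linear_iff vec4_eq_iff)

lemma bounded_linear_qim3: "bounded_linear qim3"
  by (rule linear_conv_bounded_linear[THEN iffD1]) (simp add: linear_iff vec3_eq_iff)

lemma bounded_linear_pure4: "bounded_linear pure4"
  by (rule linear_conv_bounded_linear[THEN iffD1]) (simp add: linear_iff vec4_eq_iff)

lemma norm_pure4: "norm (pure4 v) = norm v"
proof -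
  have "(norm (pure4 v))^2 = (norm v)^2" unfolding power2_norm_vec4 power2_norm_vec3 by simp
  then show ?thesis by (simp add: power2_eq_iff_nonneg)
qed

lemma norm_qone [simp]: "norm qone = 1"
  by (simp add: norm_eq_sqrt_inner inner_vec_def sum_4)

section \<open>Exponential and logarithm of unit quaternions\<close>

lemma unit_quaternion_coords: "norm (r::real^4) = 1 \<Longrightarrow> r$1^2 + r$2^2 + r$3^2 + r$4^2 = 1"
  using power2_norm_vec4[of r] by simp

lemma unit_quaternion_re_bounds:
  assumes "norm (r::real^4) = 1" shows "-1 \<le> r$1" "r$1 \<le> 1"
proof -
  have "r$1^2 \<le> 1" using unit_quaternion_coords[OF assms] by (smt (verit) zero_le_power2)
  then show "-1 \<le> r$1" "r$1 \<le> 1" by (simp_all add: abs_square_le_1)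
qed

lemma norm_qim3_unit: assumes "norm (r::real^4) = 1" shows "norm (qim3 r) = sqrt (1 - r$1^2)"
proof -
  have "(norm (qim3 r))^2 = 1 - r$1^2"
    using unit_quaternion_coords[OF assms] power2_norm_vec3[of "qim3 r"] by simp
  then show ?thesis by (simp add: real_sqrt_unique)
qed

lemma unit_quaternion_re_eq_minus_1:
  assumes "norm (r::real^4) = 1" shows "r$1 = -1 \<longleftrightarrow> r = - qone"
proof
  assume re: "r$1 = -1"
  then have "qim3 r = 0" using norm_qim3_unit[OF assms] by simp
  then show "r = - qone" using re by (simp add: vec4_eq_iff vec3_eq_iff)
qed simp

lemma unit_quaternion_qim3_eq_0:
  assumes "norm (r::real^4) = 1" shows "qim3 r = 0 \<longleftrightarrow> r$1 = 1 \<or> r$1 = -1"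
  using norm_qim3_unit[OF assms] unit_quaternion_re_bounds[OF assms] by (auto simp: power2_eq_1_iff)

definition log_scale :: "real \<Rightarrow> real" where
  "log_scale u = (if u = 1 then 1 else arccos u / sqrt (1 - u^2))"

lemma qlog3_eq_log_scale:
  assumes "norm (r::real^4) = 1" "r$1 \<noteq> -1"
  shows "qlog3 r = log_scale (r$1) *\<^sub>R qim3 r"
  using assms norm_qim3_unit[OF assms(1)] unit_quaternion_qim3_eq_0[OF assms(1)]
  by (auto simp: qlog3_def log_scale_def)

lemma qexp3_nth:
  "qexp3 w $ 1 = cos (norm w)"
  "qexp3 w $ 2 = (if w = 0 then 1 else sin (norm w) / norm w) * w$1"
  "qexp3 w $ 3 = (if w = 0 then 1 else sin (norm w) / norm w) * w$2"
  "qexp3 w $ 4 = (if w = 0 then 1 else sin (norm w) / norm w) * w$3"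
  by (simp_all add: qexp3_def Let_def)

lemma qexp3_0 [simp]: "qexp3 0 = qone"
  by (simp add: vec4_eq_iff qexp3_nth)

lemma norm_qlog3:
  assumes "norm (r::real^4) = 1" "qim3 r \<noteq> 0"
  shows "norm (qlog3 r) = arccos (r$1)"
  using assms unit_quaternion_re_bounds[OF assms(1)] by (simp add: qlog3_def arccos_lbound)

lemma qexp3_qlog3:
  assumes "norm (r::real^4) = 1" "r$1 \<noteq> -1"
  shows "qexp3 (qlog3 r) = r"
proof (cases "qim3 r = 0")
  case True
  then have "r$1 = 1" using assms unit_quaternion_qim3_eq_0 by blast
  then show ?thesis using True by (simp add: qlog3_def vec4_eq_iff vec3_eq_iff)
next
  case False
  have re: "-1 < r$1" "r$1 < 1"
    using False assms unit_quaternion_re_bounds[OF assms(1)] unit_quaternion_qim3_eq_0[OF assms(1)]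
    by auto
  have angle: "0 < arccos (r$1)" "arccos (r$1) < pi" using arccos_lt_bounded[OF re] by auto
  have ni: "norm (qim3 r) > 0" using False by simp
  define c where "c = arccos (r$1) / norm (qim3 r)"
  have ql: "qlog3 r = c *\<^sub>R qim3 r" using False by (simp add: qlog3_def c_def)
  have nl: "norm (qlog3 r) = arccos (r$1)" using norm_qlog3[OF assms(1) False] .
  have nz: "qlog3 r \<noteq> 0" using nl angle by auto
  have "sin (arccos (r$1)) = norm (qim3 r)"
    using sin_arccos_abs[of "r$1"] re norm_qim3_unit[OF assms(1)] by simp
  then have k: "sin (norm (qlog3 r)) / norm (qlog3 r) * c = 1"
    unfolding nl c_def using angle ni by simp
  have e: "(sin (norm (qlog3 r)) / norm (qlog3 r) * c) * r$2 = r$2"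
       "(sin (norm (qlog3 r)) / norm (qlog3 r) * c) * r$3 = r$3"
       "(sin (norm (qlog3 r)) / norm (qlog3 r) * c) * r$4 = r$4" unfolding k by simp_all
  have q: "qlog3 r $ 1 = c * r$2" "qlog3 r $ 2 = c * r$3" "qlog3 r $ 3 = c * r$4"
    unfolding ql by simp_all
  show ?thesis unfolding vec4_eq_iff qexp3_nth if_not_P[OF nz] q
    using re e by (simp only: nl cos_arccos mult.assoc[symmetric])
qed

lemma norm_qlog3_less_pi:
  assumes "norm (r::real^4) = 1" "r$1 \<noteq> -1"
  shows "norm (qlog3 r) < pi"
proof (cases "qim3 r = 0")
  case True
  then show ?thesis by (simp add: qlog3_def)
next
  case False
  then have "-1 < r$1" "r$1 < 1"
    using assms unit_quaternion_re_bounds[OF assms(1)] unit_quaternion_qim3_eq_0[OF assms(1)]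
    by auto
  then show ?thesis using norm_qlog3[OF assms(1) False] arccos_lt_bounded by auto
qed

definition qexp_polar :: "real^3 \<Rightarrow> real^4" where
  "qexp_polar w = cos (norm w) *\<^sub>R qone + (sin (norm w) / norm w) *\<^sub>R pure4 w"

definition qexp_polar_deriv :: "real^3 \<Rightarrow> real^3 \<Rightarrow> real^4" where
  "qexp_polar_deriv w h = (- sin (norm w) * (sgn w \<bullet> h)) *\<^sub>R qone
     + ((cos (norm w) * norm w - sin (norm w)) / (norm w)^2 * (sgn w \<bullet> h)) *\<^sub>R pure4 w
     + (sin (norm w) / norm w) *\<^sub>R pure4 h"

lemma qexp3_eq_qexp_polar: "w \<noteq> 0 \<Longrightarrow> qexp3 w = qexp_polar w"
  by (simp add: vec4_eq_iff qexp3_nth qexp_polar_def)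

lemma has_derivative_qexp_polar:
  assumes "w \<noteq> 0" shows "(qexp_polar has_derivative qexp_polar_deriv w) (at w)"
proof -
  have n: "norm w \<noteq> 0" using assms by simp
  have dn: "(norm has_derivative (\<lambda>h. h \<bullet> sgn w)) (at w)"
    using has_derivative_norm[OF assms] by simp
  have "DERIV (\<lambda>x. sin x / x) (norm w) :>
      (cos (norm w) * norm w - sin (norm w) * 1) / (norm w * norm w)"
    by (rule DERIV_divide[OF DERIV_sin DERIV_ident n])
  then have ds: "DERIV (\<lambda>x. sin x / x) (norm w) :>
      (cos (norm w) * norm w - sin (norm w)) / (norm w)^2"
    by (simp add: power2_eq_square)
  have "(qexp_polar has_derivative (\<lambda>h.
      (cos (norm w) *\<^sub>R 0 + ((h \<bullet> sgn w) * (- sin (norm w))) *\<^sub>R qone)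
      + ((sin (norm w) / norm w) *\<^sub>R pure4 h
         + ((h \<bullet> sgn w) * ((cos (norm w) * norm w - sin (norm w)) / (norm w)^2)) *\<^sub>R pure4 w)))
    (at w)"
    unfolding qexp_polar_def
    by (intro has_derivative_add has_derivative_scaleR has_derivative_const
        DERIV_compose_FDERIV[OF DERIV_cos dn] DERIV_compose_FDERIV[OF ds dn]
        bounded_linear.has_derivative[OF bounded_linear_pure4 has_derivative_ident])
  then show ?thesis
    by (rule has_derivative_eq_rhs) (auto simp: qexp_polar_deriv_def algebra_simps inner_commute)
qed

lemma tendsto_cos_minus_1_over_x: "(\<lambda>x::real. (cos x - 1) / x) \<midarrow>0\<rightarrow> 0"
  using DERIV_cos[of 0] unfolding DERIV_def by simp

lemma tendsto_sin_over_x: "(\<lambda>x::real. sin x / x) \<midarrow>0\<rightarrow> 1"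
  using DERIV_sin[of 0] unfolding DERIV_def by simp

lemma has_derivative_qexp3_0: "(qexp3 has_derivative pure4) (at 0)"
  unfolding has_derivative_at
proof (intro conjI bounded_linear_pure4)
  define G where "G x = \<bar>(cos x - 1) / x\<bar> + \<bar>sin x / x - 1\<bar>" for x :: real
  have "G \<midarrow>0\<rightarrow> \<bar>0\<bar> + \<bar>1 - 1\<bar>"
    unfolding G_def by (intro tendsto_intros tendsto_cos_minus_1_over_x tendsto_sin_over_x)
  then have "G \<midarrow>0\<rightarrow> 0" by simp
  then have GN: "(\<lambda>h::real^3. G (norm h)) \<midarrow>0\<rightarrow> 0"
    by (rule LIM_compose2[rotated]) (auto intro!: tendsto_eq_intros exI[of _ 1])
  show "(\<lambda>h. norm (qexp3 (0 + h) - qexp3 0 - pure4 h) / norm h) \<midarrow>0\<rightarrow> 0"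
  proof (rule Lim_null_comparison[OF _ GN])
    show "\<forall>\<^sub>F h in at 0. norm (norm (qexp3 (0 + h) - qexp3 0 - pure4 h) / norm h) \<le> G (norm h)"
    proof (rule eventually_at_filter[THEN iffD2], rule always_eventually, intro allI impI)
      fix h :: "real^3" assume "h \<noteq> 0"
      then have n: "norm h > 0" by simp
      have "qexp3 (0 + h) - qexp3 0 - pure4 h
          = (cos (norm h) - 1) *\<^sub>R qone + (sin (norm h) / norm h - 1) *\<^sub>R pure4 h"
        using \<open>h \<noteq> 0\<close> by (simp add: qexp3_eq_qexp_polar qexp_polar_def algebra_simps)
      then have "norm (qexp3 (0 + h) - qexp3 0 - pure4 h)
          \<le> \<bar>cos (norm h) - 1\<bar> + \<bar>sin (norm h) / norm h - 1\<bar> * norm h"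
        by (metis norm_triangle_ineq norm_scaleR norm_qone norm_pure4 mult.right_neutral real_norm_def)
      then have "norm (qexp3 (0 + h) - qexp3 0 - pure4 h) / norm h
          \<le> (\<bar>cos (norm h) - 1\<bar> + \<bar>sin (norm h) / norm h - 1\<bar> * norm h) / norm h"
        using n by (simp add: divide_right_mono)
      also have "\<dots> = G (norm h)" using n by (simp add: G_def add_divide_distrib abs_divide)
      finally show "norm (norm (qexp3 (0 + h) - qexp3 0 - pure4 h) / norm h) \<le> G (norm h)"
        by simp
    qed
  qed
qed

definition Dqexp :: "real^3 \<Rightarrow> real^3 \<Rightarrow> real^4" where
  "Dqexp w = (if w = 0 then pure4 else qexp_polar_deriv w)"

lemma has_derivative_qexp3: "(qexp3 has_derivative Dqexp w) (at w)"
proof (cases "w = 0")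
  case False
  have "(qexp3 has_derivative qexp_polar_deriv w) (at w)"
    by (rule has_derivative_transform_within_open[OF has_derivative_qexp_polar[OF False], of "-{0}"])
       (auto simp: False qexp3_eq_qexp_polar)
  then show ?thesis by (simp add: Dqexp_def False)
qed (simp add: Dqexp_def has_derivative_qexp3_0)

lemma isCont_qexp3: "isCont qexp3 w"
  by (rule has_derivative_continuous[OF has_derivative_qexp3])

lemma bounded_linear_Dqexp: "bounded_linear (Dqexp w)"
  by (rule has_derivative_bounded_linear[OF has_derivative_qexp3])

lemma Qmat_eq_Dqexp: "Qmat r = Dqexp (qlog3 r)"
  unfolding Qmat_def by (rule frechet_derivative_at[OF has_derivative_qexp3, symmetric])

text \<open>This is where the rotation angle \<open>\<phi> = 2 * norm (log r)\<close> staying below \<open>2 * pi\<close> is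
  used: \<open>sin (norm w) > 0\<close> for \<open>0 < norm w < pi\<close>.\<close>

lemma Dqexp_eq_0_iff:
  assumes "norm w < pi" shows "Dqexp w h = 0 \<longleftrightarrow> h = 0"
proof
  assume D: "Dqexp w h = 0"
  show "h = 0"
  proof (cases "w = 0")
    case True
    then show ?thesis using D by (metis Dqexp_def norm_pure4 norm_eq_zero)
  next
    case False
    have n: "0 < norm w" using False by simp
    have s: "sin (norm w) > 0" using sin_gt_zero[OF n assms] .
    have "(Dqexp w h) $ 1 = 0" using D by simp
    then have "sgn w \<bullet> h = 0" using s False by (simp add: Dqexp_def qexp_polar_deriv_def)
    then have "pure4 h = 0" using D s n False by (simp add: Dqexp_def qexp_polar_deriv_def)
    then show ?thesis by (metis norm_pure4 norm_eq_zero)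
  qed
qed (simp add: linear_0[OF bounded_linear.linear[OF bounded_linear_Dqexp]])

section \<open>Differentiating the logarithm along a curve\<close>

lemma tendsto_x_over_sin: "((\<lambda>x::real. x / sin x) \<longlongrightarrow> 1) (at 0)"
proof -
  have "((\<lambda>x::real. inverse (sin x / x)) \<longlongrightarrow> inverse 1) (at 0)"
    by (rule tendsto_inverse[OF tendsto_sin_over_x]) simp
  then show ?thesis by simp
qed

lemma continuous_log_scale_at_1: "continuous (at 1 within {-1..1}) log_scale"
proof -
  have "(arccos \<longlongrightarrow> arccos 1) (at 1 within {-1..1})"
    using continuous_on_arccos'[unfolded continuous_on_def, rule_format, of 1] by simp
  then have "filterlim arccos (at 0) (at 1 within {-1..1})"
    unfolding filterlim_at by (auto simp: eventually_at_filter arccos_eq_0_iff)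
  then have "((\<lambda>u. arccos u / sin (arccos u)) \<longlongrightarrow> 1) (at 1 within {-1..1})"
    by (rule filterlim_compose[OF tendsto_x_over_sin])
  moreover have "\<forall>\<^sub>F u in at 1 within {-1..1}. arccos u / sin (arccos u) = log_scale u"
    unfolding eventually_at_filter
    by (rule always_eventually) (auto simp: log_scale_def sin_arccos_abs abs_le_iff)
  ultimately have "(log_scale \<longlongrightarrow> 1) (at 1 within {-1..1})"
    by (rule Lim_transform_eventually)
  then show ?thesis unfolding continuous_within by (simp add: log_scale_def)
qed

lemma log_scale_has_derivative:
  assumes "-1 < u" "u < 1" shows "\<exists>D. (log_scale has_real_derivative D) (at u)"
proof -
  have pos: "0 < 1 - u^2" using assms by (simp add: abs_square_less_1 abs_less_iff)
  have d: "DERIV (\<lambda>u. 1 - u^2) u :> 0 - real 2 * u ^ (2 - Suc 0)"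
    by (rule DERIV_diff[OF DERIV_const DERIV_pow])
  have sq: "DERIV (\<lambda>u. sqrt (1 - u^2)) u :>
      inverse (sqrt (1 - u^2)) / 2 * (0 - real 2 * u ^ (2 - Suc 0))"
    by (rule DERIV_chain2[OF _ d]) (rule DERIV_real_sqrt[OF pos])
  have "sqrt (1 - u^2) \<noteq> 0" using pos by simp
  then obtain D where D: "DERIV (\<lambda>u. arccos u / sqrt (1 - u^2)) u :> D"
    using DERIV_divide[OF DERIV_arccos[OF assms] sq] by blast
  have "DERIV log_scale u :> D"
    by (rule has_field_derivative_transform_within_open[OF D, of "{-1<..<1}"])
       (use assms in \<open>auto simp: log_scale_def\<close>)
  then show ?thesis by blast
qed

lemma has_vector_derivative_scaleR_vanishing:
  fixes h :: "real \<Rightarrow> 'a::real_normed_vector"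
  assumes h: "(h has_vector_derivative h') (at t within S)" and h0: "h t = 0"
    and g: "continuous (at t within S) g"
  shows "((\<lambda>s. g s *\<^sub>R h s) has_vector_derivative g t *\<^sub>R h') (at t within S)"
proof -
  have Q: "((\<lambda>s. (h s - h t - (s - t) *\<^sub>R h') /\<^sub>R norm (s - t)) \<longlongrightarrow> 0) (at t within S)"
    using h unfolding has_vector_derivative_def has_derivative_at_within by simp
  have gt: "(g \<longlongrightarrow> g t) (at t within S)" using g by (simp add: continuous_within)
  have A: "((\<lambda>s. g s *\<^sub>R ((h s - h t - (s - t) *\<^sub>R h') /\<^sub>R norm (s - t))) \<longlongrightarrow> g t *\<^sub>R 0)
      (at t within S)"
    by (rule tendsto_scaleR[OF gt Q])
  have B: "((\<lambda>s. ((g s - g t) * ((s - t) / norm (s - t))) *\<^sub>R h') \<longlongrightarrow> 0) (at t within S)"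
  proof (rule Lim_null_comparison)
    show "\<forall>\<^sub>F s in at t within S.
        norm (((g s - g t) * ((s - t) / norm (s - t))) *\<^sub>R h') \<le> \<bar>g s - g t\<bar> * norm h'"
    proof (rule always_eventually, intro allI)
      fix s
      have "\<bar>(s - t) / norm (s - t)\<bar> \<le> 1" by (cases "s = t") auto
      then have "\<bar>(g s - g t) * ((s - t) / norm (s - t))\<bar> \<le> \<bar>g s - g t\<bar>"
        by (simp add: abs_mult mult_left_le)
      then show "norm (((g s - g t) * ((s - t) / norm (s - t))) *\<^sub>R h') \<le> \<bar>g s - g t\<bar> * norm h'"
        by (simp only: norm_scaleR) (rule mult_right_mono[OF _ norm_ge_zero])
    qed
    have "((\<lambda>s. \<bar>g s - g t\<bar> * norm h') \<longlongrightarrow> \<bar>g t - g t\<bar> * norm h') (at t within S)"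
      by (intro tendsto_intros gt)
    then show "((\<lambda>s. \<bar>g s - g t\<bar> * norm h') \<longlongrightarrow> 0) (at t within S)" by simp
  qed
  have "g s *\<^sub>R ((h s - h t - (s - t) *\<^sub>R h') /\<^sub>R norm (s - t))
        + ((g s - g t) * ((s - t) / norm (s - t))) *\<^sub>R h'
      = (g s *\<^sub>R h s - g t *\<^sub>R h t - (s - t) *\<^sub>R (g t *\<^sub>R h')) /\<^sub>R norm (s - t)" for s
    using h0 by (simp add: algebra_simps scaleR_diff_right divide_inverse)
  then have "((\<lambda>s. (g s *\<^sub>R h s - g t *\<^sub>R h t - (s - t) *\<^sub>R (g t *\<^sub>R h')) /\<^sub>R norm (s - t))
      \<longlongrightarrow> 0) (at t within S)"
    using tendsto_add[OF A B] by simp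
  then show ?thesis
    unfolding has_vector_derivative_def has_derivative_at_within
    by (intro conjI bounded_linear_scaleR_left)
qed

text \<open>At real part \<open>1\<close>, \<^const>\<open>log_scale\<close> is merely continuous; this suffices because the
  imaginary part vanishes there.\<close>

lemma qlog3_curve_differentiable:
  assumes r: "\<And>s. s \<in> S \<Longrightarrow> norm (r s) = 1 \<and> r s $ 1 \<noteq> -1"
    and dr: "(r has_vector_derivative r') (at t within S)" and t: "t \<in> S"
  shows "\<exists>l'. ((\<lambda>s. qlog3 (r s)) has_vector_derivative l') (at t within S)"
proof -
  have dim: "((\<lambda>s. qim3 (r s)) has_vector_derivative qim3 r') (at t within S)"
    by (rule bounded_linear.has_vector_derivative[OF bounded_linear_qim3 dr])
  have d1: "((\<lambda>s. r s $ 1) has_vector_derivative r' $ 1) (at t within S)"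
    by (rule bounded_linear.has_vector_derivative[OF bounded_linear_vec_nth dr])
  have bnds: "-1 \<le> r s $ 1" "r s $ 1 \<le> 1" if "s \<in> S" for s
    using unit_quaternion_re_bounds r that by auto
  obtain l' where l': "((\<lambda>s. log_scale (r s $ 1) *\<^sub>R qim3 (r s)) has_vector_derivative l')
      (at t within S)"
  proof (cases "r t $ 1 = 1")
    case True
    have "continuous (at 1 within (\<lambda>s. r s $ 1) ` S) log_scale"
      by (rule continuous_within_subset[OF continuous_log_scale_at_1]) (use bnds in auto)
    then have "continuous (at t within S) (\<lambda>s. log_scale (r s $ 1))"
      using continuous_within_compose[OF has_vector_derivative_continuous[OF d1]] True
      by (simp add: o_def)
    moreover have "qim3 (r t) = 0" using True r[OF t] unit_quaternion_qim3_eq_0 by blast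
    ultimately show thesis using has_vector_derivative_scaleR_vanishing[OF dim] that by blast
  next
    case False
    then obtain D where "DERIV log_scale (r t $ 1) :> D"
      using log_scale_has_derivative r[OF t] bnds[OF t] by fastforce
    then have "((\<lambda>s. log_scale (r s $ 1)) has_real_derivative D * (r' $ 1)) (at t within S)"
      using DERIV_chain' d1 has_real_derivative_iff_has_vector_derivative by blast
    then show thesis using has_vector_derivative_scaleR[OF _ dim] that by blast
  qed
  have "((\<lambda>s. qlog3 (r s)) has_vector_derivative l') (at t within S)"
    by (rule has_vector_derivative_transform[OF t _ l']) (use r qlog3_eq_log_scale in auto)
  then show ?thesis by blast
qed

lemma has_vector_derivative_qlog3:
  assumes r: "\<And>s. s \<in> S \<Longrightarrow> norm (r s) = 1 \<and> r s $ 1 \<noteq> -1"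
    and dr: "(r has_vector_derivative Dqexp (qlog3 (r t)) v) (at t within S)"
    and t: "t \<in> S" and nontrivial: "at t within S \<noteq> bot"
  shows "((\<lambda>s. qlog3 (r s)) has_vector_derivative v) (at t within S)"
proof -
  obtain l' where l': "((\<lambda>s. qlog3 (r s)) has_vector_derivative l') (at t within S)"
    using qlog3_curve_differentiable[OF r dr t] by blast
  have lin: "linear (Dqexp (qlog3 (r t)))"
    by (rule bounded_linear.linear[OF bounded_linear_Dqexp])
  have "((\<lambda>s. qexp3 (qlog3 (r s))) has_derivative (\<lambda>x. Dqexp (qlog3 (r t)) (x *\<^sub>R l')))
      (at t within S)"
    by (rule has_derivative_compose[OF l'[unfolded has_vector_derivative_def] has_derivative_qexp3])
  then have "((\<lambda>s. qexp3 (qlog3 (r s))) has_vector_derivative Dqexp (qlog3 (r t)) l')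
      (at t within S)"
    unfolding has_vector_derivative_def using linear_scale[OF lin] by simp
  then have "(r has_vector_derivative Dqexp (qlog3 (r t)) l') (at t within S)"
    by (rule has_vector_derivative_transform[OF t, rotated]) (use r qexp3_qlog3 in auto)
  then have "Dqexp (qlog3 (r t)) l' = Dqexp (qlog3 (r t)) v"
    by (rule vector_derivative_unique_within[OF nontrivial _ dr])
  then have "Dqexp (qlog3 (r t)) (l' - v) = 0" by (simp add: linear_diff[OF lin])
  then have "l' = v" using Dqexp_eq_0_iff norm_qlog3_less_pi r[OF t] by simp
  then show ?thesis using l' by simp
qed

section \<open>Dual quaternions\<close>

definition dq_one :: dq where
  "dq_one = (qone, 0)"

lemma dq_mult_assoc: "dq_mult (dq_mult x y) z = dq_mult x (dq_mult y z)"
  by (simp add: dq_mult_def qmult_assoc qmult_add_left qmult_add_right)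

lemma dq_conj_dq_mult: "dq_conj (dq_mult x y) = dq_mult (dq_conj y) (dq_conj x)"
  by (simp add: dq_mult_def dq_conj_def qconj_qmult vec4_eq_iff)

lemma dq_mult_one [simp]: "dq_mult x dq_one = x" "dq_mult dq_one x = x"
  by (simp_all add: dq_mult_def dq_one_def)

lemma bounded_linear_dq_mult_left: "bounded_linear (\<lambda>z. dq_mult z c)"
  by (rule linear_conv_bounded_linear[THEN iffD1])
     (auto simp: linear_iff dq_mult_def qmult_add_left qmult_scaleR_left scaleR_add_right)

lemma dq_mult_uminus_left: "dq_mult (- z) c = - dq_mult z c"
  by (simp add: dq_mult_def vec4_eq_iff)

lemma H8minus_eq_dq_mult: "H8minus h v = dq_mult v h"
  by (simp add: H8minus_def dq_mult_def H4minus_def add.commute)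

lemma unit_dq_iff: "unit_dq x \<longleftrightarrow> dq_mult x (dq_conj x) = dq_one"
  by (simp add: unit_dq_def dq_one_def)

lemma unit_dq_norm_fst: assumes "unit_dq x" shows "norm (fst x) = 1"
proof -
  have "qmult (fst x) (qconj (fst x)) = qone"
    using assms by (simp add: unit_dq_def dq_mult_def dq_conj_def)
  then have "(norm (fst x))^2 = 1" unfolding qmult_qconj_self by (simp add: vec4_eq_iff)
  then show ?thesis using norm_ge_zero[of "fst x"] by (auto simp: power2_eq_1_iff)
qed

lemma unit_dq_dual_part:
  "unit_dq x \<Longrightarrow> qmult (fst x) (qconj (snd x)) + qmult (snd x) (qconj (fst x)) = 0"
  by (simp add: unit_dq_def dq_mult_def dq_conj_def)

lemma unit_dq_left_inverse: assumes "unit_dq x" shows "dq_mult (dq_conj x) x = dq_one"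
proof -
  obtain r d where x: "x = (r, d)" by force
  have rr: "qmult (qconj r) r = qone"
    using qmult_qconj_self_left[of r] unit_dq_norm_fst[OF assms] x by simp
  have "qmult r (qconj d) + qmult d (qconj r) = 0" using unit_dq_dual_part[OF assms] x by simp
  then have "qmult (qconj r) (qmult (qmult r (qconj d) + qmult d (qconj r)) r) = 0" by simp
  then have "qmult (qconj d) r + qmult (qconj r) d = 0"
    by (simp add: qmult_add_left qmult_add_right qmult_assoc[symmetric] rr) (simp add: qmult_assoc rr)
  then show ?thesis using rr x by (simp add: dq_mult_def dq_conj_def dq_one_def add.commute)
qed

lemma unit_dq_dq_mult: assumes "unit_dq x" "unit_dq y" shows "unit_dq (dq_mult x y)"
proof -
  have "dq_mult (dq_mult x y) (dq_conj (dq_mult x y))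
      = dq_mult x (dq_mult (dq_mult y (dq_conj y)) (dq_conj x))"
    by (simp add: dq_conj_dq_mult dq_mult_assoc)
  also have "\<dots> = dq_one" using assms by (simp add: unit_dq_iff)
  finally show ?thesis by (simp add: unit_dq_iff)
qed

lemma unit_dq_dq_conj: "unit_dq x \<Longrightarrow> unit_dq (dq_conj x)"
  using unit_dq_left_inverse by (simp add: unit_dq_iff dq_conj_def)

text \<open>Writing \<open>x = r + \<epsilon> (1/2) p r\<close>, the product \<open>qmult (snd x) (qconj (fst x))\<close> is \<open>p/2\<close>.\<close>

lemma unit_dq_translation_pure: assumes "unit_dq x" shows "qmult (snd x) (qconj (fst x)) $ 1 = 0"
  using arg_cong[OF unit_dq_dual_part[OF assms], of "\<lambda>q. q $ 1"] by (simp add: algebra_simps)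

lemma unit_dq_snd_eq: assumes "unit_dq x" shows "snd x = qmult (qmult (snd x) (qconj (fst x))) (fst x)"
  using qmult_qconj_self_left[of "fst x"] unit_dq_norm_fst[OF assms] by (simp add: qmult_assoc)

definition dq_exp6 :: "(real^3) \<times> (real^3) \<Rightarrow> dq" where
  "dq_exp6 w = (qexp3 (fst w), qmult (pure4 (snd w)) (qexp3 (fst w)))"

lemma dq_exp6_dq_log6:
  assumes "unit_dq x" "fst x \<noteq> - qone" shows "dq_exp6 (dq_log6 x) = x"
proof -
  have n: "norm (fst x) = 1" by (rule unit_dq_norm_fst[OF assms(1)])
  then have "qexp3 (qlog3 (fst x)) = fst x"
    using assms(2) unit_quaternion_re_eq_minus_1 qexp3_qlog3 by blast
  then show ?thesis
    using unit_dq_snd_eq[OF assms(1)] pure4_qim3[OF unit_dq_translation_pure[OF assms(1)]]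
    by (simp add: dq_exp6_def dq_log6_def prod_eq_iff)
qed

lemma isCont_dq_exp6: "isCont dq_exp6 w"
proof -
  have "isCont (\<lambda>w. qexp3 (fst w)) w" by (simp add: isCont_o2[OF _ isCont_qexp3])
  moreover have "isCont (\<lambda>w. pure4 (snd w)) w"
    by (simp add: bounded_linear.isCont[OF bounded_linear_pure4])
  ultimately show ?thesis
    unfolding dq_exp6_def by (intro continuous_Pair bounded_bilinear.isCont[OF bounded_bilinear_qmult])
qed

lemma fst_Q8: "fst (Q8 X v) = Dqexp (qlog3 (fst X)) (fst v)"
  by (simp add: Q8_def Let_def Qmat_eq_Dqexp)

lemma snd_Q8: "snd (Q8 X v) = qmult (qmult (snd X) (qconj (fst X))) (Dqexp (qlog3 (fst X)) (fst v))
    + qmult (pure4 (snd v)) (fst X)"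
  by (simp add: Q8_def Let_def Qmat_eq_Dqexp H4plus_def H4minus_def qmult_scaleR_left)

lemma linear_Q8: "linear (Q8 X)"
  using linear_add[OF bounded_linear.linear[OF bounded_linear_Dqexp]]
    linear_scale[OF bounded_linear.linear[OF bounded_linear_Dqexp]]
  by (auto simp: linear_iff prod_eq_iff fst_Q8 snd_Q8 vec4_eq_iff algebra_simps)

lemma unit_quaternion_curve_tangent:
  assumes R: "\<And>s. s \<in> S \<Longrightarrow> norm (R s) = 1" and dR: "(R has_vector_derivative R') (at t within S)"
    and t: "t \<in> S" and nontrivial: "at t within S \<noteq> bot"
  shows "qmult (R t) (qconj R') + qmult R' (qconj (R t)) = 0"
proof -
  have "((\<lambda>s. qmult (R s) (qconj (R s))) has_vector_derivative
      qmult (R t) (qconj R') + qmult R' (qconj (R t))) (at t within S)"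
    by (rule bounded_bilinear.has_vector_derivative[OF bounded_bilinear_qmult dR
          bounded_linear.has_vector_derivative[OF bounded_linear_qconj dR]])
  moreover have "((\<lambda>s. qmult (R s) (qconj (R s))) has_vector_derivative 0) (at t within S)"
    by (rule has_vector_derivative_transform[OF t, where f = "\<lambda>s. qone"])
       (auto simp: qmult_qconj_self R)
  ultimately show ?thesis by (rule vector_derivative_unique_within[OF nontrivial])
qed

text \<open>The identity \<open>vec\<^sub>8 (dx/dt) = Q\<^sub>8 x vec\<^sub>6 (d/dt log x)\<close>, read backwards: \<^const>\<open>Q8\<close> is the
  differential of the exponential at the logarithm, so it can be inverted along curves.\<close>

lemma has_vector_derivative_translation_log:
  assumes X: "\<And>s. s \<in> S \<Longrightarrow> unit_dq (X s)"
    and dX: "(X has_vector_derivative Q8 (X t) v) (at t within S)"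
    and t: "t \<in> S" and nontrivial: "at t within S \<noteq> bot"
  shows "((\<lambda>s. qim3 (qmult (snd (X s)) (qconj (fst (X s))))) has_vector_derivative snd v)
    (at t within S)"
proof -
  define R where "R = (\<lambda>s. fst (X s))"
  define P where "P = (\<lambda>s. qmult (snd (X s)) (qconj (R s)))"
  define R' where "R' = Dqexp (qlog3 (R t)) (fst v)"
  have dR: "(R has_vector_derivative R') (at t within S)"
    using bounded_linear.has_vector_derivative[OF bounded_linear_fst dX]
    by (simp add: R_def R'_def fst_Q8)
  have dS: "((\<lambda>s. snd (X s)) has_vector_derivative qmult (P t) R' + qmult (pure4 (snd v)) (R t))
      (at t within S)"
    using bounded_linear.has_vector_derivative[OF bounded_linear_snd dX]
    by (simp add: R_def R'_def P_def snd_Q8)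
  have dP: "(P has_vector_derivative qmult (snd (X t)) (qconj R')
      + qmult (qmult (P t) R' + qmult (pure4 (snd v)) (R t)) (qconj (R t))) (at t within S)"
    using bounded_bilinear.has_vector_derivative[OF bounded_bilinear_qmult dS
        bounded_linear.has_vector_derivative[OF bounded_linear_qconj dR]]
    unfolding P_def by simp
  have unit: "norm (R s) = 1" if "s \<in> S" for s
    using unit_dq_norm_fst X that by (simp add: R_def)
  have tangent: "qmult (R t) (qconj R') + qmult R' (qconj (R t)) = 0"
    by (rule unit_quaternion_curve_tangent[OF _ dR t nontrivial]) (use unit in auto)
  have RR: "qmult (R t) (qconj (R t)) = qone" using qmult_qconj_self unit[OF t] by simp
  have "snd (X t) = qmult (P t) (R t)" using unit_dq_snd_eq[OF X[OF t]] by (simp add: P_def R_def)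
  then have "qmult (snd (X t)) (qconj R')
        + qmult (qmult (P t) R' + qmult (pure4 (snd v)) (R t)) (qconj (R t))
      = qmult (P t) (qmult (R t) (qconj R') + qmult R' (qconj (R t)))
        + qmult (pure4 (snd v)) (qmult (R t) (qconj (R t)))"
    by (simp add: qmult_assoc qmult_add_left qmult_add_right)
  also have "\<dots> = pure4 (snd v)" using tangent RR by simp
  finally have "(P has_vector_derivative pure4 (snd v)) (at t within S)" using dP by simp
  from bounded_linear.has_vector_derivative[OF bounded_linear_qim3 this]
  show ?thesis by (simp add: P_def R_def)
qed

lemma has_vector_derivative_dq_log6:
  assumes X: "\<And>s. s \<in> S \<Longrightarrow> unit_dq (X s) \<and> fst (X s) \<noteq> - qone"
    and dX: "(X has_vector_derivative Q8 (X t) v) (at t within S)"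
    and t: "t \<in> S" and nontrivial: "at t within S \<noteq> bot"
  shows "((\<lambda>s. dq_log6 (X s)) has_vector_derivative v) (at t within S)"
proof -
  have R: "norm (fst (X s)) = 1 \<and> fst (X s) $ 1 \<noteq> -1" if "s \<in> S" for s
    using X[OF that] by (simp add: unit_dq_norm_fst unit_quaternion_re_eq_minus_1)
  have "((\<lambda>s. fst (X s)) has_vector_derivative Dqexp (qlog3 (fst (X t))) (fst v)) (at t within S)"
    using bounded_linear.has_vector_derivative[OF bounded_linear_fst dX] by (simp add: fst_Q8)
  then have "((\<lambda>s. qlog3 (fst (X s))) has_vector_derivative fst v) (at t within S)"
    by (intro has_vector_derivative_qlog3) (use R t nontrivial in auto)
  moreover have "((\<lambda>s. qim3 (qmult (snd (X s)) (qconj (fst (X s))))) has_vector_derivative snd v)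
      (at t within S)"
    by (rule has_vector_derivative_translation_log[OF _ dX t nontrivial]) (use X in blast)
  ultimately have "((\<lambda>s. (qlog3 (fst (X s)), qim3 (qmult (snd (X s)) (qconj (fst (X s))))))
      has_vector_derivative (fst v, snd v)) (at t within S)"
    by (rule has_vector_derivative_Pair)
  then show ?thesis by (simp add: dq_log6_def)
qed

section \<open>Dynamics of the closed-loop output\<close>

lemma at_within_atLeast_neq_bot:
  assumes "a \<le> (t::real)" shows "at t within {a..} \<noteq> bot"
proof (cases "t = a")
  case True
  have "at t within {t..} = at_right t" by (rule at_within_Ici_at_right)
  moreover have "at_right t \<noteq> bot" using trivial_limit_at_right_real[of t] by (simp add: trivial_limit_def)
  ultimately show ?thesis using True by simp
next
  case False
  then have "t \<in> interior {a..}" using assms by simp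
  then have "at t within {a..} = at t" by (rule at_within_interior)
  then show ?thesis by simp
qed

lemma closed_loop_xc_unit:
  assumes "closed_loop_solution a \<delta> x" "\<And>i. unit_dq (\<delta> i)" "0 \<le> s"
  shows "unit_dq (xc \<delta> x i s) \<and> fst (xc \<delta> x i s) \<noteq> - qone"
  using assms unit_dq_dq_mult unit_dq_dq_conj by (auto simp: closed_loop_solution_def xc_def)

lemma closed_loop_xc_derivative:
  assumes sol: "closed_loop_solution a \<delta> x" and \<delta>: "\<And>i. unit_dq (\<delta> i)" and t: "0 \<le> t"
  shows "((\<lambda>s. xc \<delta> x i s) has_vector_derivative
      Q8 (xc \<delta> x i t) (- (\<Sum>j\<in>UNIV. a i j *\<^sub>R (yc \<delta> x i t - yc \<delta> x j t)))) (at t within {0..})"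
proof -
  define w where "w = Q8 (xc \<delta> x i t) (\<Sum>j\<in>UNIV. a i j *\<^sub>R (yc \<delta> x i t - yc \<delta> x j t))"
  have dx: "(x i has_vector_derivative - H8minus (\<delta> i) w) (at t within {0..})"
    using sol t by (simp add: closed_loop_solution_def protocol_def w_def)
  have "((\<lambda>s. dq_mult (x i s) (dq_conj (\<delta> i))) has_vector_derivative
      dq_mult (- H8minus (\<delta> i) w) (dq_conj (\<delta> i))) (at t within {0..})"
    by (rule bounded_linear.has_vector_derivative[OF bounded_linear_dq_mult_left dx])
  moreover have "dq_mult (- H8minus (\<delta> i) w) (dq_conj (\<delta> i)) = - w"
    using \<delta>[of i] by (simp add: dq_mult_uminus_left H8minus_eq_dq_mult dq_mult_assoc unit_dq_iff)
  ultimately show ?thesis by (simp add: xc_def w_def linear_neg[OF linear_Q8])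
qed

lemma closed_loop_yc_derivative:
  assumes sol: "closed_loop_solution a \<delta> x" and \<delta>: "\<And>i. unit_dq (\<delta> i)" and t: "0 \<le> t"
  shows "((\<lambda>s. yc \<delta> x i s) has_vector_derivative
      - (\<Sum>j\<in>UNIV. a i j *\<^sub>R (yc \<delta> x i t - yc \<delta> x j t))) (at t within {0..})"
proof -
  have "((\<lambda>s. dq_log6 (xc \<delta> x i s)) has_vector_derivative
      - (\<Sum>j\<in>UNIV. a i j *\<^sub>R (yc \<delta> x i t - yc \<delta> x j t))) (at t within {0..})"
    by (rule has_vector_derivative_dq_log6[OF _ closed_loop_xc_derivative[OF sol \<delta> t]])
       (use closed_loop_xc_unit[OF sol \<delta>] t at_within_atLeast_neq_bot in auto)
  then show ?thesis by (simp only: yc_def)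
qed

section \<open>Linear consensus dynamics\<close>

lemma first_zero_crossing:
  fixes g :: "'m::finite \<Rightarrow> real \<Rightarrow> real"
  assumes cont: "\<And>i. continuous_on {ta..tb} (g i)" and init: "\<And>i. g i ta < 0"
    and t: "ta \<le> t" "t \<le> tb" and crossed: "0 \<le> g i t"
  obtains ts i0 where "ta < ts" "ts \<le> tb" "g i0 ts = 0" "\<And>j. g j ts \<le> 0"
    "\<And>j s. ta \<le> s \<Longrightarrow> s < ts \<Longrightarrow> g j s < 0"
proof -
  define Z where "Z = (\<Union>j. {s \<in> {ta..tb}. (\<lambda>s. 0) s \<le> g j s})"
  have closed: "closed {s \<in> {ta..tb}. (\<lambda>s. 0) s \<le> g j s}" for j
    by (rule continuous_on_closed_Collect_le[OF continuous_on_const cont]) simp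
  have "closed Z" unfolding Z_def by (rule closed_UN) (use closed in auto)
  moreover have bdd: "bdd_below Z" unfolding Z_def by (intro bdd_belowI[of _ ta]) auto
  moreover have "t \<in> Z" unfolding Z_def using t crossed by auto
  ultimately have "Inf Z \<in> Z" using closed_contains_Inf by auto
  define ts where "ts = Inf Z"
  have low: "ts \<le> s" if "s \<in> Z" for s unfolding ts_def using bdd that by (simp add: cInf_lower)
  have "ts \<in> Z" using \<open>Inf Z \<in> Z\<close> by (simp add: ts_def)
  then obtain i0 where i0: "0 \<le> g i0 ts" "ta \<le> ts" "ts \<le> tb" unfolding Z_def by auto
  have "ts \<noteq> ta" using i0 init[of i0] by auto
  then have lt: "ta < ts" using i0 by simp
  have below: "g j s < 0" if "ta \<le> s" "s < ts" for j s
  proof (rule ccontr)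
    assume "\<not> g j s < 0"
    then have "s \<in> Z" using that i0 unfolding Z_def by (simp add: not_less) (blast intro: order.trans)
    then show False using low[of s] that by simp
  qed
  have contsub: "continuous_on {ta..ts} (g j)" for j
    by (rule continuous_on_subset[OF cont]) (use i0 in auto)
  have all_le: "g j ts \<le> 0" for j
  proof (rule ccontr)
    assume "\<not> g j ts \<le> 0"
    then obtain z where z: "ta \<le> z" "z \<le> ts" "g j z = 0"
      using IVT'[of "g j" ta 0 ts, OF _ _ _ contsub] init[of j] lt by auto
    have "z \<noteq> ts" using z \<open>\<not> g j ts \<le> 0\<close> by auto
    then show False using below[of z j] z by simp
  qed
  have "g i0 ts = 0" using all_le[of i0] i0(1) by simp
  show thesis by (rule that[OF lt i0(3) \<open>g i0 ts = 0\<close> all_le below])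
qed

lemma barrier_stays_negative:
  fixes g g' :: "'m::finite \<Rightarrow> real \<Rightarrow> real"
  assumes cont: "\<And>i. continuous_on {ta..tb} (g i)"
    and der: "\<And>i t. ta < t \<Longrightarrow> t \<le> tb \<Longrightarrow> (g i has_real_derivative g' i t) (at t)"
    and init: "\<And>i. g i ta < 0"
    and touch: "\<And>i t. ta < t \<Longrightarrow> t \<le> tb \<Longrightarrow> g i t = 0 \<Longrightarrow> (\<And>j. g j t \<le> 0) \<Longrightarrow> g' i t < 0"
    and t: "ta \<le> t" "t \<le> tb"
  shows "g i t < 0"
proof (rule ccontr)
  assume "\<not> g i t < 0"
  then have "0 \<le> g i t" by simp
  then obtain ts i0 where ts: "ta < ts" "ts \<le> tb" and zero: "g i0 ts = 0"
    and all_le: "\<And>j. g j ts \<le> 0" and below: "\<And>j s. ta \<le> s \<Longrightarrow> s < ts \<Longrightarrow> g j s < 0"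
    using first_zero_crossing[where g = g, OF cont init t] by blast
  have "g' i0 ts < 0" by (rule touch[OF ts zero all_le])
  then obtain d where d: "d > 0" "\<And>h. h > 0 \<Longrightarrow> h < d \<Longrightarrow> g i0 ts < g i0 (ts - h)"
    using DERIV_neg_dec_left[OF der[OF ts]] by auto
  define h where "h = min (d/2) ((ts - ta)/2)"
  have h: "h > 0" "h < d" using d ts by (auto simp: h_def)
  have "ta \<le> ts - h" using ts min.cobounded2[of "d/2" "(ts - ta)/2"] by (simp add: h_def)
  then have "g i0 (ts - h) < 0" using h by (intro below) simp_all
  then show False using d(2)[OF h] zero by simp
qed

locale linear_consensus =
  fixes a :: "'n::finite \<Rightarrow> 'n \<Rightarrow> real" and y :: "'n \<Rightarrow> real \<Rightarrow> real"
  assumes nonneg: "\<And>i j. a i j \<ge> 0"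
    and ode: "\<And>i t. 0 \<le> t \<Longrightarrow>
      (y i has_real_derivative (\<Sum>j\<in>UNIV. a i j * (y j t - y i t))) (at t within {0..})"
begin

definition drift where
  "drift i t = (\<Sum>j\<in>UNIV. a i j * (y j t - y i t))"

lemma has_real_derivative_drift: "0 < t \<Longrightarrow> (y i has_real_derivative drift i t) (at t)"
  using ode[of t i] at_within_interior[of t "{0..}"] by (simp add: drift_def)

lemma continuous_on_y: "0 \<le> t0 \<Longrightarrow> continuous_on {t0..t1} (y i)"
  unfolding continuous_on_eq_continuous_within
proof
  fix t assume "0 \<le> t0" "t \<in> {t0..t1}"
  then have "continuous (at t within {0..}) (y i)" using ode[of t i] DERIV_continuous by auto
  then show "continuous (at t within {t0..t1}) (y i)"
    by (rule continuous_within_subset) (use \<open>0 \<le> t0\<close> in auto)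
qed

lemma linear_consensus_uminus: "linear_consensus a (\<lambda>i t. - y i t)"
proof
  fix i t assume "0 \<le> (t::real)"
  have "((\<lambda>t. - y i t) has_real_derivative - (\<Sum>j\<in>UNIV. a i j * (y j t - y i t)))
      (at t within {0..})"
    using ode[OF \<open>0 \<le> t\<close>] by (rule DERIV_minus)
  moreover have "- (\<Sum>j\<in>UNIV. a i j * (y j t - y i t)) = (\<Sum>j\<in>UNIV. a i j * (- y j t - - y i t))"
    by (simp add: sum_negf[symmetric] algebra_simps)
  ultimately show "((\<lambda>t. - y i t) has_real_derivative (\<Sum>j\<in>UNIV. a i j * (- y j t - - y i t)))
      (at t within {0..})"
    by simp
qed (rule nonneg)

lemma drift_nonpos_at_max: "(\<And>j. y j t \<le> y i t) \<Longrightarrow> drift i t \<le> 0"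
  unfolding drift_def by (rule sum_nonpos) (use nonneg in \<open>simp add: mult_nonneg_nonpos\<close>)

lemma upper_bound_invariant:
  assumes s: "0 \<le> s" "s \<le> t" and B: "\<And>j. y j s \<le> B"
  shows "y i t \<le> B"
proof (rule ccontr)
  assume "\<not> y i t \<le> B"
  define e where "e = (y i t - B) / (2 * (1 + t - s))"
  have e: "e > 0" using \<open>\<not> y i t \<le> B\<close> s by (simp add: e_def)
  have "(\<lambda>j \<tau>. y j \<tau> - B - e * (1 + \<tau> - s)) i t < 0"
  proof (rule barrier_stays_negative[where g = "\<lambda>j \<tau>. y j \<tau> - B - e * (1 + \<tau> - s)"
        and g' = "\<lambda>j \<tau>. drift j \<tau> - e" and ta = s and tb = t])
    show "continuous_on {s..t} (\<lambda>\<tau>. y j \<tau> - B - e * (1 + \<tau> - s))" for j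
      by (intro continuous_intros continuous_on_y s)
    show "((\<lambda>\<tau>. y j \<tau> - B - e * (1 + \<tau> - s)) has_real_derivative drift j \<tau> - e) (at \<tau>)"
      if "s < \<tau>" "\<tau> \<le> t" for j \<tau>
    proof -
      have "((\<lambda>\<tau>. y j \<tau> - B - e * (1 + \<tau> - s)) has_real_derivative
          drift j \<tau> - 0 - e * (0 + 1 - 0)) (at \<tau>)"
        using that s
        by (intro DERIV_diff DERIV_cmult DERIV_add DERIV_const DERIV_ident has_real_derivative_drift)
          simp
      then show ?thesis by simp
    qed
    show "drift j \<tau> - e < 0"
      if "s < \<tau>" "\<tau> \<le> t" "y j \<tau> - B - e * (1 + \<tau> - s) = 0"
        "\<And>l. y l \<tau> - B - e * (1 + \<tau> - s) \<le> 0" for j \<tau>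
    proof -
      have "y l \<tau> \<le> y j \<tau>" for l using that(3) that(4)[of l] by linarith
      then show ?thesis using drift_nonpos_at_max e by fastforce
    qed
    show "y j s - B - e * (1 + s - s) < 0" for j using B[of j] e by simp
  qed (use s in auto)
  moreover have "e * (1 + t - s) = (y i t - B) / 2" using s by (simp add: e_def field_simps)
  ultimately show False using \<open>\<not> y i t \<le> B\<close> by simp
qed

lemma lower_bound_invariant:
  assumes "0 \<le> s" "s \<le> t" and "\<And>j. B \<le> y j s"
  shows "B \<le> y i t"
  using linear_consensus.upper_bound_invariant[OF linear_consensus_uminus, of s t "- B" i] assms
  by simp

text \<open>Comparison with the solution of \<open>g' = - D g + \<gamma>\<close> for the gap \<open>g = Mx - y i\<close>.\<close>

lemma gap_comparison:
  assumes s: "0 \<le> t0" "t0 \<le> t1" and D: "D > 0"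
    and drift: "\<And>\<tau>. t0 < \<tau> \<Longrightarrow> \<tau> \<le> t1 \<Longrightarrow> drift i \<tau> \<le> D * (Mx - y i \<tau>) - \<gamma>"
    and init: "y i t0 \<le> Mx - c0"
    and tau: "t0 \<le> \<tau>" "\<tau> \<le> t1"
  shows "y i \<tau> \<le> Mx - (c0 * exp (- D * (\<tau> - t0)) + \<gamma> / D * (1 - exp (- D * (\<tau> - t0))))"
proof (rule ccontr)
  define b where "b \<tau> = c0 * exp (- D * (\<tau> - t0)) + \<gamma> / D * (1 - exp (- D * (\<tau> - t0)))" for \<tau>
  assume "\<not> ?thesis"
  then have "y i \<tau> > Mx - b \<tau>" by (simp add: b_def)
  define e where "e = (y i \<tau> - (Mx - b \<tau>)) / 2"
  have e: "e > 0" using \<open>y i \<tau> > Mx - b \<tau>\<close> by (simp add: e_def)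
  have db: "(b has_real_derivative (\<gamma> - D * c0) * exp (- D * (\<tau> - t0))) (at \<tau>)" for \<tau>
  proof -
    have "(b has_real_derivative c0 * (exp (- D * (\<tau> - t0)) * (- D * (1 - 0)))
        + \<gamma> / D * (0 - exp (- D * (\<tau> - t0)) * (- D * (1 - 0)))) (at \<tau>)"
      unfolding b_def by (intro DERIV_add DERIV_cmult DERIV_diff DERIV_const DERIV_fun_exp DERIV_ident)
    then show ?thesis using D by (simp add: algebra_simps)
  qed
  have "(\<lambda>(_::unit) \<tau>. y i \<tau> - Mx + b \<tau> - e) () \<tau> < 0"
  proof (rule barrier_stays_negative[where g = "\<lambda>_ \<tau>. y i \<tau> - Mx + b \<tau> - e"
        and g' = "\<lambda>_ \<tau>. drift i \<tau> + (\<gamma> - D * c0) * exp (- D * (\<tau> - t0))" and ta = t0 and tb = t1])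
    show "continuous_on {t0..t1} (\<lambda>\<tau>. y i \<tau> - Mx + b \<tau> - e)"
      unfolding b_def by (intro continuous_intros continuous_on_y s)
    show "((\<lambda>\<tau>. y i \<tau> - Mx + b \<tau> - e) has_real_derivative
        drift i \<tau> + (\<gamma> - D * c0) * exp (- D * (\<tau> - t0))) (at \<tau>)" if "t0 < \<tau>" "\<tau> \<le> t1" for \<tau>
    proof -
      have "((\<lambda>\<tau>. y i \<tau> - Mx + b \<tau> - e) has_real_derivative
          drift i \<tau> - 0 + (\<gamma> - D * c0) * exp (- D * (\<tau> - t0)) - 0) (at \<tau>)"
        using that s by (intro DERIV_diff DERIV_add DERIV_const db has_real_derivative_drift) simp
      then show ?thesis by simp
    qed
    show "drift i \<tau> + (\<gamma> - D * c0) * exp (- D * (\<tau> - t0)) < 0"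
      if "t0 < \<tau>" "\<tau> \<le> t1" "y i \<tau> - Mx + b \<tau> - e = 0" for \<tau>
    proof -
      have "Mx - y i \<tau> = b \<tau> - e" using that(3) by simp
      then have "drift i \<tau> \<le> D * (b \<tau> - e) - \<gamma>" using drift[OF that(1,2)] by simp
      moreover have "D * b \<tau> = D * c0 * exp (- D * (\<tau> - t0)) + \<gamma> - \<gamma> * exp (- D * (\<tau> - t0))"
        using D by (simp add: b_def algebra_simps)
      moreover have "D * e > 0" using D e by simp
      ultimately show ?thesis by (simp add: algebra_simps)
    qed
  qed (use tau init e in \<open>auto simp: b_def\<close>)
  then show False using e by (simp add: e_def)
qed

lemma drift_bound_by_neighbour:
  assumes up: "\<And>j. y j \<tau> \<le> Mx" and p: "y p \<tau> \<le> Mx - c" and c: "c \<ge> 0"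
    and \<alpha>: "\<alpha> \<le> a i p" and row: "(\<Sum>j\<in>UNIV. a i j) \<le> D"
  shows "drift i \<tau> \<le> D * (Mx - y i \<tau>) - \<alpha> * c"
proof -
  have "drift i \<tau> = (\<Sum>j\<in>UNIV. a i j * (y j \<tau> - Mx)) + (\<Sum>j\<in>UNIV. a i j) * (Mx - y i \<tau>)"
    unfolding drift_def sum_distrib_right sum.distrib[symmetric]
    by (rule sum.cong) (auto simp: algebra_simps)
  moreover have "(\<Sum>j\<in>UNIV. a i j * (y j \<tau> - Mx)) \<le> a i p * (y p \<tau> - Mx)"
  proof -
    have "(\<Sum>j\<in>UNIV - {p}. a i j * (y j \<tau> - Mx)) \<le> 0"
      by (rule sum_nonpos) (use up nonneg in \<open>simp add: mult_nonneg_nonpos\<close>)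
    then show ?thesis using sum.remove[of UNIV p "\<lambda>j. a i j * (y j \<tau> - Mx)"] by simp
  qed
  moreover have "a i p * (y p \<tau> - Mx) \<le> - (\<alpha> * c)"
    using mult_left_mono[of "y p \<tau> - Mx" "- c" "a i p"] mult_right_mono[OF \<alpha> c] p nonneg[of i p]
    by simp
  moreover have "(\<Sum>j\<in>UNIV. a i j) * (Mx - y i \<tau>) \<le> D * (Mx - y i \<tau>)"
    using row up[of i] by (intro mult_right_mono) auto
  ultimately show ?thesis by simp
qed

end

definition tree_depth :: "('n \<Rightarrow> 'n) \<Rightarrow> 'n \<Rightarrow> 'n \<Rightarrow> nat" where
  "tree_depth par k i = (LEAST m. (par ^^ m) i = k)"

definition tree_height :: "('n::finite \<Rightarrow> 'n) \<Rightarrow> 'n \<Rightarrow> nat" where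
  "tree_height par k = Max (range (tree_depth par k))"

definition weight_bound :: "('n::finite \<Rightarrow> 'n \<Rightarrow> real) \<Rightarrow> real" where
  "weight_bound a = 1 + (\<Sum>i\<in>UNIV. \<Sum>j\<in>UNIV. a i j)"

definition min_tree_weight :: "('n::finite \<Rightarrow> 'n \<Rightarrow> real) \<Rightarrow> 'n \<Rightarrow> ('n \<Rightarrow> 'n) \<Rightarrow> real" where
  "min_tree_weight a k par = Min (insert 1 ((\<lambda>i. a i (par i)) ` {i. i \<noteq> k}))"

text \<open>If the parent of a vertex stays \<open>c\<close> below the running maximum for a unit of time, the
  vertex itself ends up \<open>pull_factor a k par * c\<close> below it.  Iterating this down the tree from
  a root that starts half the spread away from the maximum gives the \<open>contraction_factor\<close>.\<close>

definition pull_factor :: "('n::finite \<Rightarrow> 'n \<Rightarrow> real) \<Rightarrow> 'n \<Rightarrow> ('n \<Rightarrow> 'n) \<Rightarrow> real" where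
  "pull_factor a k par = min_tree_weight a k par / weight_bound a * (1 - exp (- weight_bound a))"

definition contraction_factor :: "('n::finite \<Rightarrow> 'n \<Rightarrow> real) \<Rightarrow> 'n \<Rightarrow> ('n \<Rightarrow> 'n) \<Rightarrow> real" where
  "contraction_factor a k par =
     pull_factor a k par ^ tree_height par k * exp (- weight_bound a * tree_height par k) / 2"

locale consensus_tree = linear_consensus a y for a :: "'n::finite \<Rightarrow> 'n \<Rightarrow> real" and y +
  fixes k :: 'n and par :: "'n \<Rightarrow> 'n"
  assumes tree_arc: "\<And>i. i \<noteq> k \<Longrightarrow> a i (par i) > 0"
    and tree_reach: "\<And>i. \<exists>m. (par ^^ m) i = k"
begin

lemma consensus_tree_uminus: "consensus_tree a (\<lambda>i t. - y i t) k par"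
  by (intro consensus_tree.intro linear_consensus_uminus consensus_tree_axioms.intro tree_arc tree_reach)

lemma funpow_tree_depth: "(par ^^ tree_depth par k i) i = k"
  unfolding tree_depth_def by (rule LeastI_ex[OF tree_reach])

lemma tree_depth_eq_0_iff: "tree_depth par k i = 0 \<longleftrightarrow> i = k"
  using funpow_tree_depth[of i] by (auto simp: tree_depth_def)

lemma tree_depth_parent_less: assumes "i \<noteq> k" shows "tree_depth par k (par i) < tree_depth par k i"
proof -
  obtain n where n: "tree_depth par k i = Suc n"
    using assms tree_depth_eq_0_iff not0_implies_Suc by blast
  have "(par ^^ n) (par i) = k" using funpow_tree_depth[of i] unfolding n funpow_Suc_right by simp
  then have "tree_depth par k (par i) \<le> n" unfolding tree_depth_def by (rule Least_le)
  then show ?thesis using n by simp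
qed

lemma tree_depth_le_height: "tree_depth par k i \<le> tree_height par k"
  unfolding tree_height_def by (rule Max_ge) auto

lemma weight_bound_ge_1: "weight_bound a \<ge> 1"
  using nonneg by (simp add: weight_bound_def sum_nonneg)

lemma row_sum_le_weight_bound: "(\<Sum>j\<in>UNIV. a i j) \<le> weight_bound a"
proof -
  have "(\<Sum>j\<in>UNIV. a i j) \<le> (\<Sum>i\<in>UNIV. \<Sum>j\<in>UNIV. a i j)"
    by (rule member_le_sum) (auto intro!: sum_nonneg simp: nonneg)
  then show ?thesis by (simp add: weight_bound_def)
qed

lemma min_tree_weight:
  "0 < min_tree_weight a k par" "min_tree_weight a k par \<le> 1"
  "i \<noteq> k \<Longrightarrow> min_tree_weight a k par \<le> a i (par i)"
  using tree_arc by (auto simp: min_tree_weight_def Min_gr_iff)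

lemma pull_factor: "0 < pull_factor a k par" "pull_factor a k par \<le> 1"
proof -
  have w: "0 < min_tree_weight a k par / weight_bound a" "min_tree_weight a k par / weight_bound a \<le> 1"
    using min_tree_weight weight_bound_ge_1 by auto
  have e: "0 < 1 - exp (- weight_bound a)" "1 - exp (- weight_bound a) \<le> 1"
    using weight_bound_ge_1 by auto
  show "0 < pull_factor a k par" unfolding pull_factor_def using mult_pos_pos[OF w(1) e(1)] .
  show "pull_factor a k par \<le> 1"
    unfolding pull_factor_def using mult_le_one[OF w(2) less_imp_le[OF e(1)] e(2)] .
qed

lemma contraction_factor: "0 < contraction_factor a k par" "contraction_factor a k par \<le> 1/2"
proof -
  have "pull_factor a k par ^ tree_height par k \<le> 1" using pull_factor by (simp add: power_le_one)
  moreover have "exp (- weight_bound a * tree_height par k) \<le> 1" using weight_bound_ge_1 by simp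
  ultimately show "contraction_factor a k par \<le> 1/2" "0 < contraction_factor a k par"
    using pull_factor by (auto simp: contraction_factor_def intro!: mult_le_one)
qed

lemma root_gap:
  assumes s: "0 \<le> s" and up: "\<And>j. y j s \<le> Mx" and root: "y k s \<le> Mx - c" and c: "0 \<le> c"
    and \<tau>: "s \<le> \<tau>" "\<tau> \<le> s + tree_height par k"
  shows "y k \<tau> \<le> Mx - c * exp (- weight_bound a * tree_height par k)"
proof -
  define D where "D = weight_bound a"
  have "y k \<tau> \<le> Mx - (c * exp (- D * (\<tau> - s)) + 0 / D * (1 - exp (- D * (\<tau> - s))))"
  proof (rule gap_comparison[OF s _ _ _ root \<tau>])
    show "drift k t \<le> D * (Mx - y k t) - 0" if "s < t" for t
      using drift_bound_by_neighbour[of t Mx k 0 0 k D] upper_bound_invariant[OF s] up that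
        row_sum_le_weight_bound nonneg
      by (simp add: D_def)
  qed (use weight_bound_ge_1 \<tau> in \<open>auto simp: D_def\<close>)
  moreover have "c * exp (- D * tree_height par k) \<le> c * exp (- D * (\<tau> - s))"
    using \<tau> c weight_bound_ge_1 by (intro mult_left_mono) (auto simp: D_def)
  ultimately show ?thesis by (simp add: D_def)
qed

lemma descendant_gap:
  assumes s: "0 \<le> s" and up: "\<And>j. y j s \<le> Mx" and c: "0 \<le> c"
    and root: "\<And>\<tau>. s \<le> \<tau> \<Longrightarrow> \<tau> \<le> s + tree_height par k \<Longrightarrow> y k \<tau> \<le> Mx - c"
  shows "m \<le> tree_height par k \<Longrightarrow> tree_depth par k i \<le> m \<Longrightarrow>
    s + m \<le> \<tau> \<Longrightarrow> \<tau> \<le> s + tree_height par k \<Longrightarrow> y i \<tau> \<le> Mx - c * pull_factor a k par ^ m"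
proof (induction m arbitrary: i \<tau>)
  case 0
  then show ?case using root tree_depth_eq_0_iff by simp
next
  case (Suc m i \<tau>)
  define D where "D = weight_bound a"
  define R where "R = pull_factor a k par"
  have R: "0 \<le> R" "R \<le> 1" using pull_factor by (auto simp: R_def)
  show ?case
  proof (cases "i = k")
    case True
    have "c * R ^ Suc m \<le> c" using mult_left_le[OF power_le_one[OF R] c] .
    then show ?thesis using root[of \<tau>] Suc.prems True by (simp add: R_def)
  next
    case False
    have parent: "y (par i) t \<le> Mx - c * R ^ m" if "s + m \<le> t" "t \<le> s + tree_height par k" for t
      using Suc.IH[OF _ _ that] Suc.prems(1,2) tree_depth_parent_less[OF False] by (simp add: R_def)
    have up': "y j t \<le> Mx" if "s \<le> t" for j t by (rule upper_bound_invariant[OF s that up])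
    have "y i \<tau> \<le> Mx - (0 * exp (- D * (\<tau> - (s + m)))
        + min_tree_weight a k par * (c * R ^ m) / D * (1 - exp (- D * (\<tau> - (s + m)))))"
    proof (rule gap_comparison)
      fix t assume t: "s + m < t" "t \<le> s + tree_height par k"
      show "drift i t \<le> D * (Mx - y i t) - min_tree_weight a k par * (c * R ^ m)"
      proof (rule drift_bound_by_neighbour)
        show "y (par i) t \<le> Mx - c * R ^ m" using parent t by simp
      qed (use up' t R c min_tree_weight(3)[OF False] row_sum_le_weight_bound in \<open>auto simp: D_def\<close>)
    qed (use s Suc.prems up' weight_bound_ge_1 in \<open>auto simp: D_def\<close>)
    moreover have "exp (- D * (\<tau> - (s + m))) \<le> exp (- D)"
      using Suc.prems(3) weight_bound_ge_1 by (simp add: D_def)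
    moreover have "0 \<le> min_tree_weight a k par * (c * R ^ m) / D"
      using min_tree_weight R c weight_bound_ge_1 by (simp add: D_def)
    ultimately have "y i \<tau> \<le> Mx - min_tree_weight a k par * (c * R ^ m) / D * (1 - exp (- D))"
      by (smt (verit) mult_left_mono)
    then show ?thesis by (simp add: R_def pull_factor_def D_def algebra_simps)
  qed
qed

lemma upper_contraction:
  assumes s: "0 \<le> s" and up: "\<And>j. y j s \<le> Mx" and root: "y k s \<le> Mx - (Mx - mn) / 2"
    and "mn \<le> Mx"
  shows "y i (s + tree_height par k) \<le> Mx - contraction_factor a k par * (Mx - mn)"
proof -
  define c where "c = (Mx - mn) / 2 * exp (- weight_bound a * tree_height par k)"
  have "0 \<le> c" using \<open>mn \<le> Mx\<close> by (simp add: c_def)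
  have "y k \<tau> \<le> Mx - c" if "s \<le> \<tau>" "\<tau> \<le> s + tree_height par k" for \<tau>
    using root_gap[OF s up root _ that] \<open>mn \<le> Mx\<close> by (simp add: c_def)
  then have "y i (s + tree_height par k) \<le> Mx - c * pull_factor a k par ^ tree_height par k"
    by (rule descendant_gap[OF s up \<open>0 \<le> c\<close>]) (simp_all add: tree_depth_le_height)
  then show ?thesis by (simp add: c_def contraction_factor_def algebra_simps)
qed

lemma lower_contraction:
  assumes s: "0 \<le> s" and lo: "\<And>j. mn \<le> y j s" and root: "mn + (Mx - mn) / 2 \<le> y k s"
    and "mn \<le> Mx"
  shows "mn + contraction_factor a k par * (Mx - mn) \<le> y i (s + tree_height par k)"
  using consensus_tree.upper_contraction[OF consensus_tree_uminus s, of "- mn" "- Mx" i] assms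
  by (simp add: algebra_simps)

lemma spread_contraction:
  assumes s: "0 \<le> s" and b: "\<And>j. mn \<le> y j s" "\<And>j. y j s \<le> Mx"
  shows "\<exists>mn' Mx'. Mx' - mn' \<le> (1 - contraction_factor a k par) * (Mx - mn) \<and>
    (\<forall>j t. s + tree_height par k \<le> t \<longrightarrow> mn' \<le> y j t \<and> y j t \<le> Mx')"
proof -
  have "mn \<le> Mx" using b[of k] by simp
  have s': "0 \<le> s + tree_height par k" using s by simp
  show ?thesis
  proof (cases "y k s \<le> Mx - (Mx - mn) / 2")
    case True
    have u: "y j (s + tree_height par k) \<le> Mx - contraction_factor a k par * (Mx - mn)" for j
      by (rule upper_contraction[OF s b(2) True \<open>mn \<le> Mx\<close>])
    have l: "mn \<le> y j (s + tree_height par k)" for j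
      by (rule lower_bound_invariant[OF s _ b(1)]) simp
    show ?thesis
      by (rule exI[of _ mn], rule exI[of _ "Mx - contraction_factor a k par * (Mx - mn)"])
         (use upper_bound_invariant[OF s' _ u] lower_bound_invariant[OF s' _ l] in
           \<open>auto simp: algebra_simps\<close>)
  next
    case False
    then have "mn + (Mx - mn) / 2 \<le> y k s" by (simp add: not_le field_simps)
    then have l: "mn + contraction_factor a k par * (Mx - mn) \<le> y j (s + tree_height par k)" for j
      by (rule lower_contraction[OF s b(1) _ \<open>mn \<le> Mx\<close>])
    have u: "y j (s + tree_height par k) \<le> Mx" for j
      by (rule upper_bound_invariant[OF s _ b(2)]) simp
    show ?thesis
      by (rule exI[of _ "mn + contraction_factor a k par * (Mx - mn)"], rule exI[of _ Mx])
         (use upper_bound_invariant[OF s' _ u] lower_bound_invariant[OF s' _ l] in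
           \<open>auto simp: algebra_simps\<close>)
  qed
qed

lemma spread_geometric_decay:
  "\<exists>mn Mx. Mx - mn \<le> (1 - contraction_factor a k par) ^ K * (2 * (\<Sum>j\<in>UNIV. \<bar>y j 0\<bar>)) \<and>
     (\<forall>j t. real K * tree_height par k \<le> t \<longrightarrow> mn \<le> y j t \<and> y j t \<le> Mx)"
proof (induction K)
  case 0
  define S where "S = (\<Sum>j\<in>UNIV. \<bar>y j 0\<bar>)"
  have abs_le: "\<bar>y j 0\<bar> \<le> S" for j unfolding S_def by (rule member_le_sum) auto
  have b: "- S \<le> y j 0" "y j 0 \<le> S" for j using abs_le[of j] by linarith+
  show ?case
    by (rule exI[of _ "- S"], rule exI[of _ S])
       (use upper_bound_invariant[OF order.refl _ b(2)] lower_bound_invariant[OF order.refl _ b(1)] in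
         \<open>auto simp: S_def\<close>)
next
  case (Suc K)
  then obtain mn Mx where
    spread: "Mx - mn \<le> (1 - contraction_factor a k par) ^ K * (2 * (\<Sum>j\<in>UNIV. \<bar>y j 0\<bar>))" and
    bounds: "\<And>j t. real K * tree_height par k \<le> t \<Longrightarrow> mn \<le> y j t \<and> y j t \<le> Mx"
    by blast
  have "0 \<le> real K * tree_height par k" by simp
  from spread_contraction[OF this, of mn Mx] bounds obtain mn' Mx' where
    spread': "Mx' - mn' \<le> (1 - contraction_factor a k par) * (Mx - mn)" and
    bounds': "\<And>j t. real K * tree_height par k + tree_height par k \<le> t \<Longrightarrow> mn' \<le> y j t \<and> y j t \<le> Mx'"
    by auto
  have "(1 - contraction_factor a k par) * (Mx - mn)
      \<le> (1 - contraction_factor a k par) * ((1 - contraction_factor a k par) ^ K * (2 * (\<Sum>j\<in>UNIV. \<bar>y j 0\<bar>)))"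
    using spread contraction_factor by (intro mult_left_mono) auto
  then have "Mx' - mn' \<le> (1 - contraction_factor a k par) ^ Suc K * (2 * (\<Sum>j\<in>UNIV. \<bar>y j 0\<bar>))"
    using spread' by simp
  moreover have "real (Suc K) * tree_height par k = real K * tree_height par k + tree_height par k"
    by (simp add: algebra_simps)
  ultimately show ?case using bounds' by auto
qed

lemma consensus_convergent: "\<exists>c. \<forall>i. (y i \<longlongrightarrow> c) at_top"
proof -
  define q where "q = 1 - contraction_factor a k par"
  define W where "W = 2 * (\<Sum>j\<in>UNIV. \<bar>y j 0\<bar>)"
  have q: "0 < q" "q < 1" using contraction_factor by (auto simp: q_def)
  have W: "W \<ge> 0" by (simp add: W_def sum_nonneg)
  obtain lo hi where spread: "\<And>K. hi K - lo K \<le> q ^ K * W"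
    and bounds: "\<And>K j t. real K * tree_height par k \<le> t \<Longrightarrow> lo K \<le> y j t \<and> y j t \<le> hi K"
    using spread_geometric_decay[unfolded q_def[symmetric] W_def[symmetric]] by metis
  have cross: "lo K \<le> hi K'" for K K'
  proof -
    have "lo K \<le> y k (real (max K K') * tree_height par k)" using bounds by (simp add: mult_right_mono)
    also have "\<dots> \<le> hi K'" using bounds by (simp add: mult_right_mono)
    finally show ?thesis .
  qed
  define c where "c = (SUP K. lo K)"
  have "bdd_above (range lo)" by (intro bdd_aboveI2[where M = "hi 0"]) (rule cross)
  then have lo_c: "lo K \<le> c" for K unfolding c_def by (rule cSUP_upper[rotated]) simp
  have c_hi: "c \<le> hi K" for K unfolding c_def by (rule cSUP_least) (auto intro: cross)
  have "(y i \<longlongrightarrow> c) at_top" for i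
  proof (rule tendstoI)
    fix e :: real assume "e > 0"
    then obtain K where K: "q ^ K < e / (W + 1)" using real_arch_pow_inv[of "e / (W + 1)" q] W q by auto
    have "q ^ K * W \<le> q ^ K * (W + 1)" using q by simp
    also have "\<dots> < e" using K W by (simp add: field_simps)
    finally have "q ^ K * W < e" .
    have "dist (y i t) c < e" if "real K * tree_height par k \<le> t" for t
    proof -
      have "dist (y i t) c \<le> hi K - lo K"
        using bounds[OF that, of i] lo_c[of K] c_hi[of K] by (simp add: dist_real_def abs_le_iff)
      then show ?thesis using spread[of K] \<open>q ^ K * W < e\<close> by simp
    qed
    then show "\<forall>\<^sub>F t in at_top. dist (y i t) c < e" by (rule eventually_at_top_linorderI)
  qed
  then show ?thesis by blast
qed

end

lemma consensus_convergent_euclidean: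
  fixes y :: "'n::finite \<Rightarrow> real \<Rightarrow> 'v::euclidean_space"
  assumes nonneg: "\<And>i j. a i j \<ge> 0" and tree: "has_directed_spanning_tree a"
    and ode: "\<And>i t. 0 \<le> t \<Longrightarrow>
      (y i has_vector_derivative - (\<Sum>j\<in>UNIV. a i j *\<^sub>R (y i t - y j t))) (at t within {0..})"
  shows "\<exists>L. \<forall>i. (y i \<longlongrightarrow> L) at_top"
proof -
  obtain k par where arc: "\<And>i. i \<noteq> k \<Longrightarrow> a i (par i) > 0" and reach: "\<And>i. \<exists>m. (par ^^ m) i = k"
    using tree unfolding has_directed_spanning_tree_def by blast
  have "consensus_tree a (\<lambda>i t. y i t \<bullet> b) k par" for b
  proof (intro consensus_tree.intro linear_consensus.intro consensus_tree_axioms.intro nonneg arc reach)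
    fix i t assume "0 \<le> (t::real)"
    have "((\<lambda>s. y i s \<bullet> b) has_vector_derivative (- (\<Sum>j\<in>UNIV. a i j *\<^sub>R (y i t - y j t))) \<bullet> b)
        (at t within {0..})"
      by (rule bounded_linear.has_vector_derivative[OF bounded_linear_inner_left ode[OF \<open>0 \<le> t\<close>]])
    moreover have "(- (\<Sum>j\<in>UNIV. a i j *\<^sub>R (y i t - y j t))) \<bullet> b
        = (\<Sum>j\<in>UNIV. - ((a i j *\<^sub>R (y i t - y j t)) \<bullet> b))"
      by (simp add: inner_sum_left sum_negf)
    also have "\<dots> = (\<Sum>j\<in>UNIV. a i j * (y j t \<bullet> b - y i t \<bullet> b))"
      by (rule sum.cong) (simp_all add: inner_diff_left algebra_simps)
    ultimately show "((\<lambda>t. y i t \<bullet> b) has_real_derivative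
        (\<Sum>j\<in>UNIV. a i j * (y j t \<bullet> b - y i t \<bullet> b))) (at t within {0..})"
      by (simp add: has_real_derivative_iff_has_vector_derivative)
  qed
  then have "\<exists>c. \<forall>i. ((\<lambda>t. y i t \<bullet> b) \<longlongrightarrow> c) at_top" for b
    by (rule consensus_tree.consensus_convergent)
  then have "\<forall>b. \<exists>c. \<forall>i. ((\<lambda>t. y i t \<bullet> b) \<longlongrightarrow> c) at_top" by blast
  from choice[OF this] obtain c where c: "\<And>b i. ((\<lambda>t. y i t \<bullet> b) \<longlongrightarrow> c b) at_top" by blast
  have "(y i \<longlongrightarrow> (\<Sum>b\<in>Basis. c b *\<^sub>R b)) at_top" for i
  proof (rule tendsto_componentwise_iff[THEN iffD2], intro ballI)
    fix b :: 'v assume "b \<in> Basis"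
    show "((\<lambda>t. y i t \<bullet> b) \<longlongrightarrow> (\<Sum>b\<in>Basis. c b *\<^sub>R b) \<bullet> b) at_top"
      unfolding inner_sum_left_Basis[OF \<open>b \<in> Basis\<close>] by (rule c)
  qed
  then show ?thesis by blast
qed

section \<open>Spanning trees and in-closed vertex sets\<close>

lemma funpow_reaches_if_measure_decreases:
  fixes f :: "'a \<Rightarrow> 'a" and d :: "'a \<Rightarrow> nat"
  assumes "\<And>i. i \<noteq> k \<Longrightarrow> d (f i) < d i"
  shows "\<exists>m. (f ^^ m) i = k"
proof (induction "d i" arbitrary: i rule: less_induct)
  case less
  show ?case
  proof (cases "i = k")
    case False
    then obtain m where "(f ^^ m) (f i) = k" using less assms by blast
    then have "(f ^^ Suc m) i = k" by (simp only: funpow_Suc_right o_apply)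
    then show ?thesis by blast
  qed (intro exI[of _ 0], simp)
qed

definition arcs :: "('n \<Rightarrow> 'n \<Rightarrow> real) \<Rightarrow> ('n \<times> 'n) set" where
  "arcs a = {(j, i). a i j > 0}"

text \<open>Parents are chosen along shortest paths from the root.\<close>

lemma has_directed_spanning_tree_if_root:
  assumes root: "\<And>i. (k, i) \<in> (arcs a)\<^sup>*"
  shows "has_directed_spanning_tree a"
proof -
  define d where "d i = (LEAST m. (k, i) \<in> arcs a ^^ m)" for i
  have d: "(k, i) \<in> arcs a ^^ d i" for i
    unfolding d_def by (rule LeastI_ex) (rule rtrancl_power[THEN iffD1, OF root])
  have d_pos: "d i \<noteq> 0" if "i \<noteq> k" for i
    using d[of i] that by (cases "d i") auto
  have parent: "\<exists>j. (k, j) \<in> arcs a ^^ (d i - 1) \<and> a i j > 0" if i: "i \<noteq> k" for i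
  proof -
    obtain m where m: "d i = Suc m" using d_pos[OF i] not0_implies_Suc by blast
    then obtain j where "(k, j) \<in> arcs a ^^ m" "(j, i) \<in> arcs a" using d[of i] by (auto elim: relpow_Suc_E)
    then show ?thesis using m by (auto simp: arcs_def)
  qed
  define par where "par i = (SOME j. (k, j) \<in> arcs a ^^ (d i - 1) \<and> a i j > 0)" for i
  have par: "(k, par i) \<in> arcs a ^^ (d i - 1) \<and> a i (par i) > 0" if "i \<noteq> k" for i
    unfolding par_def by (rule someI_ex[OF parent[OF that]])
  have "d (par i) < d i" if "i \<noteq> k" for i
  proof -
    have "d (par i) \<le> d i - 1"
      unfolding d_def[of "par i"] by (rule Least_le) (use par[OF that] in blast)
    then show ?thesis using d_pos[OF that] by simp
  qed
  then have "\<exists>m. (par ^^ m) i = k" for i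
    by (rule funpow_reaches_if_measure_decreases[where f = par and d = d])
  then show ?thesis unfolding has_directed_spanning_tree_def using par by blast
qed

definition in_closed :: "('n \<Rightarrow> 'n \<Rightarrow> real) \<Rightarrow> 'n set \<Rightarrow> bool" where
  "in_closed a S \<longleftrightarrow> (\<forall>i\<in>S. \<forall>j. a i j > 0 \<longrightarrow> j \<in> S)"

lemma in_closed_rtrancl:
  assumes "in_closed a S" "(w, u) \<in> (arcs a)\<^sup>*" "u \<in> S" shows "w \<in> S"
  using assms(2,3) by (induction rule: converse_rtrancl_induct) (use assms(1) in \<open>auto simp: in_closed_def arcs_def\<close>)

text \<open>A minimal nonempty in-closed set is the set of ancestors of each of its vertices, so the
  ancestors of a vertex it does not reach form a second, disjoint in-closed set.\<close>

lemma disjoint_in_closed_if_no_root: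
  fixes a :: "'n::finite \<Rightarrow> 'n \<Rightarrow> real"
  assumes no_root: "\<And>k. \<exists>i. (k, i) \<notin> (arcs a)\<^sup>*"
  obtains S1 S2 where "in_closed a S1" "in_closed a S2" "S1 \<noteq> {}" "S2 \<noteq> {}" "S1 \<inter> S2 = {}"
proof -
  define anc where "anc v = {u. (u, v) \<in> (arcs a)\<^sup>*}" for v
  have anc: "in_closed a (anc v)" "v \<in> anc v" for v
    by (auto simp: in_closed_def anc_def arcs_def intro: converse_rtrancl_into_rtrancl)
  define n where "n = (LEAST n. \<exists>S. in_closed a S \<and> S \<noteq> {} \<and> card S = n)"
  have "\<exists>S. in_closed a S \<and> S \<noteq> {} \<and> card S = n"
    unfolding n_def by (rule LeastI_ex) (use anc in blast)
  then obtain S1 where S1: "in_closed a S1" "S1 \<noteq> {}" "card S1 = n" by blast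
  have minimal: "n \<le> card S" if "in_closed a S" "S \<noteq> {}" for S
    unfolding n_def by (rule Least_le) (use that in blast)
  obtain k where k: "k \<in> S1" using S1 by blast
  obtain i where i: "(k, i) \<notin> (arcs a)\<^sup>*" using no_root by blast
  have "S1 \<inter> anc i = {}"
  proof (rule ccontr)
    assume "S1 \<inter> anc i \<noteq> {}"
    then obtain u where u: "u \<in> S1" "(u, i) \<in> (arcs a)\<^sup>*" by (auto simp: anc_def)
    have sub: "anc u \<subseteq> S1" using in_closed_rtrancl[OF S1(1) _ u(1)] by (auto simp: anc_def)
    moreover have "n \<le> card (anc u)" by (rule minimal) (use anc in auto)
    ultimately have "anc u = S1" using card_subset_eq[OF finite sub] card_mono[OF finite sub] S1(3)
      by simp
    then have "(k, u) \<in> (arcs a)\<^sup>*" using k by (auto simp: anc_def)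
    then show False using u(2) i by (meson rtrancl_trans)
  qed
  then show thesis using that[OF S1(1) anc(1) S1(2)] anc(2) by blast
qed

text \<open>On the cube, a fixed point of this map (which exists by Brouwer's theorem) is an
  equilibrium of the consensus dynamics with values \<open>0\<close> on \<open>S1\<close> and \<open>1\<close> on \<open>S2\<close>.\<close>

definition averaging_map :: "('n::finite \<Rightarrow> 'n \<Rightarrow> real) \<Rightarrow> 'n set \<Rightarrow> 'n set \<Rightarrow> real^'n \<Rightarrow> real^'n" where
  "averaging_map a S1 S2 z = (\<chi> i. if i \<in> S1 then 0 else if i \<in> S2 then 1
     else if (\<Sum>j\<in>UNIV. a i j) = 0 then z $ i else (\<Sum>j\<in>UNIV. a i j * z $ j) / (\<Sum>j\<in>UNIV. a i j))"

lemma continuous_on_averaging_map: "continuous_on A (averaging_map a S1 S2)"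
  unfolding averaging_map_def
proof (intro continuous_on_vec_lambda)
  fix i
  show "continuous_on A (\<lambda>z. if i \<in> S1 then 0 else if i \<in> S2 then 1
      else if (\<Sum>j\<in>UNIV. a i j) = 0 then z $ i else (\<Sum>j\<in>UNIV. a i j * z $ j) / (\<Sum>j\<in>UNIV. a i j))"
    by (cases "i \<in> S1"; cases "i \<in> S2"; cases "(\<Sum>j\<in>UNIV. a i j) = 0")
       (auto intro!: continuous_intros)
qed

lemma averaging_map_cbox:
  assumes nonneg: "\<And>i j. a i j \<ge> 0" and z: "z \<in> cbox 0 1"
  shows "averaging_map a S1 S2 z \<in> cbox 0 1"
proof -
  have zb: "0 \<le> z $ j" "z $ j \<le> 1" for j using z by (auto simp: mem_box_cart)
  have "0 \<le> averaging_map a S1 S2 z $ i \<and> averaging_map a S1 S2 z $ i \<le> 1" for i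
  proof (cases "i \<in> S1 \<or> i \<in> S2 \<or> (\<Sum>j\<in>UNIV. a i j) = 0")
    case True
    then show ?thesis using zb[of i] by (auto simp: averaging_map_def)
  next
    case False
    then have "0 < (\<Sum>j\<in>UNIV. a i j)" using nonneg by (simp add: sum_nonneg order_less_le)
    moreover have "0 \<le> (\<Sum>j\<in>UNIV. a i j * z $ j)" by (intro sum_nonneg) (use nonneg zb in auto)
    moreover have "(\<Sum>j\<in>UNIV. a i j * z $ j) \<le> (\<Sum>j\<in>UNIV. a i j)"
      by (intro sum_mono) (use nonneg zb in \<open>auto intro: mult_left_le\<close>)
    ultimately show ?thesis using False by (simp add: averaging_map_def)
  qed
  then show ?thesis by (simp add: mem_box_cart)
qed

lemma equilibrium_if_averaging_map_fixed:
  assumes nonneg: "\<And>i j. a i j \<ge> 0"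
    and S: "in_closed a S1" "in_closed a S2" "S1 \<inter> S2 = {}"
    and fixed: "averaging_map a S1 S2 z = z"
  shows "(\<Sum>j\<in>UNIV. a i j * (z $ i - z $ j)) = 0"
proof -
  have z: "z $ i = averaging_map a S1 S2 z $ i" for i using fixed by simp
  show ?thesis
  proof (cases "i \<in> S1 \<or> i \<in> S2")
    case True
    have "z $ j = z $ i" if "a i j > 0" for j
    proof -
      have "j \<in> S1 \<longleftrightarrow> i \<in> S1" "j \<in> S2 \<longleftrightarrow> i \<in> S2"
        using True that S unfolding in_closed_def by blast+
      then show ?thesis using True z[of i] z[of j] by (auto simp: averaging_map_def)
    qed
    then have "a i j * (z $ i - z $ j) = 0" for j using nonneg[of i j] by (cases "a i j > 0") auto
    then show ?thesis by (intro sum.neutral) blast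
  next
    case False
    have "(\<Sum>j\<in>UNIV. a i j * (z $ i - z $ j)) = z $ i * (\<Sum>j\<in>UNIV. a i j) - (\<Sum>j\<in>UNIV. a i j * z $ j)"
      by (simp add: algebra_simps sum_subtractf sum_distrib_left)
    moreover have "a i j = 0" if "(\<Sum>j\<in>UNIV. a i j) = 0" for j
      using that sum_nonneg_eq_0_iff[of UNIV "a i"] nonneg by simp
    ultimately show ?thesis using False z[of i] by (auto simp: averaging_map_def split: if_splits)
  qed
qed

lemma nonconstant_equilibrium_if_no_spanning_tree:
  fixes a :: "'n::finite \<Rightarrow> 'n \<Rightarrow> real"
  assumes nonneg: "\<And>i j. a i j \<ge> 0" and no_tree: "\<not> has_directed_spanning_tree a"
  obtains y p q where "\<And>i. (\<Sum>j\<in>UNIV. a i j * (y i - y j)) = 0" "y p \<noteq> y q"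
proof -
  have "\<exists>i. (k, i) \<notin> (arcs a)\<^sup>*" for k
  proof (rule ccontr)
    assume "\<nexists>i. (k, i) \<notin> (arcs a)\<^sup>*"
    then have "has_directed_spanning_tree a" by (intro has_directed_spanning_tree_if_root) auto
    with no_tree show False by contradiction
  qed
  then obtain S1 S2 where S: "in_closed a S1" "in_closed a S2" "S1 \<noteq> {}" "S2 \<noteq> {}" "S1 \<inter> S2 = {}"
    by (rule disjoint_in_closed_if_no_root)
  obtain p q where pq: "p \<in> S1" "q \<in> S2" using S by blast
  have "(0::real^'n) \<in> cbox 0 1" by (simp add: mem_box_cart)
  then have nonempty: "cbox (0::real^'n) 1 \<noteq> {}" by blast
  have "averaging_map a S1 S2 \<in> cbox 0 1 \<rightarrow> cbox 0 1"
    using averaging_map_cbox[of a, OF nonneg] by blast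
  from brouwer[OF compact_cbox convex_box(1) nonempty continuous_on_averaging_map this]
  obtain z where fixed: "averaging_map a S1 S2 z = z" by blast
  have "q \<notin> S1" using pq S(5) by blast
  have "z $ p = 0" using arg_cong[OF fixed, of "\<lambda>v. v $ p"] pq by (simp add: averaging_map_def)
  moreover have "z $ q = 1"
    using arg_cong[OF fixed, of "\<lambda>v. v $ q"] pq \<open>q \<notin> S1\<close> by (simp add: averaging_map_def)
  moreover have "(\<Sum>j\<in>UNIV. a i j * (z $ i - z $ j)) = 0" for i
    by (rule equilibrium_if_averaging_map_fixed[of a, OF nonneg S(1,2,5) fixed])
  ultimately show thesis using that[of "\<lambda>i. z $ i" p q] by simp
qed

section \<open>Formation control\<close>

lemma formation_if_spanning_tree:
  assumes nonneg: "\<And>i j. a i j \<ge> 0" and \<delta>: "\<And>i. unit_dq (\<delta> i)"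
    and tree: "has_directed_spanning_tree a"
  shows "achieves_formation a \<delta>"
  unfolding achieves_formation_def
proof (intro allI impI)
  fix x assume sol: "closed_loop_solution a \<delta> x"
  obtain L where L: "\<And>i. (yc \<delta> x i \<longlongrightarrow> L) at_top"
    using consensus_convergent_euclidean[of a, OF nonneg tree closed_loop_yc_derivative[OF sol \<delta>]]
    by blast
  have "((\<lambda>t. xc \<delta> x i t) \<longlongrightarrow> dq_exp6 L) at_top" for i
  proof (rule Lim_transform_eventually[OF isCont_tendsto_compose[OF isCont_dq_exp6 L]])
    show "\<forall>\<^sub>F t in at_top. dq_exp6 (yc \<delta> x i t) = xc \<delta> x i t"
      using eventually_ge_at_top[of 0]
      by eventually_elim (simp add: yc_def dq_exp6_dq_log6 closed_loop_xc_unit[OF sol \<delta>])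
  qed
  then show "\<exists>L. \<forall>i. ((\<lambda>t. xc \<delta> x i t) \<longlongrightarrow> L) at_top" by blast
qed

lemma xc_dq_mult:
  assumes "unit_dq (\<delta> i)" shows "xc \<delta> (\<lambda>i t. dq_mult (X i) (\<delta> i)) i t = X i"
  using assms by (simp add: xc_def dq_mult_assoc unit_dq_iff)

lemma closed_loop_solution_translations:
  fixes w :: "'n::finite \<Rightarrow> real^3"
  assumes \<delta>: "\<And>i. unit_dq (\<delta> i)" and balanced: "\<And>i. (\<Sum>j\<in>UNIV. a i j *\<^sub>R (w i - w j)) = 0"
  shows "closed_loop_solution a \<delta> (\<lambda>i t. dq_mult (qone, pure4 (w i)) (\<delta> i))"
    (is "closed_loop_solution a \<delta> ?x")
proof -
  have xc: "xc \<delta> ?x i t = (qone, pure4 (w i))" for i t using \<delta> by (rule xc_dq_mult)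
  have yc: "yc \<delta> ?x i t = (0, w i)" for i t
    by (simp add: yc_def xc dq_log6_def qlog3_def vec3_eq_iff)
  have balanced_yc: "(\<Sum>j\<in>UNIV. a i j *\<^sub>R (yc \<delta> ?x i t - yc \<delta> ?x j t)) = 0" for i t
    using balanced[of i] by (simp add: yc prod_eq_iff fst_sum snd_sum)
  have "H8minus h 0 = 0" for h by (simp add: H8minus_def H4minus_def zero_prod_def)
  then have protocol: "protocol a \<delta> ?x i t = 0" for i t
    unfolding protocol_def balanced_yc by (simp add: linear_0[OF linear_Q8])
  have "unit_dq (qone, pure4 (w i))" for i
    by (simp add: unit_dq_def dq_mult_def dq_conj_def vec4_eq_iff)
  then show ?thesis
    using \<delta> unit_dq_dq_mult by (auto simp: closed_loop_solution_def xc protocol vec4_eq_iff)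
qed

lemma no_formation_if_no_spanning_tree:
  fixes a :: "'n::finite \<Rightarrow> 'n \<Rightarrow> real"
  assumes nonneg: "\<And>i j. a i j \<ge> 0" and \<delta>: "\<And>i. unit_dq (\<delta> i)"
    and no_tree: "\<not> has_directed_spanning_tree a"
  shows "\<not> achieves_formation a \<delta>"
proof
  assume formation: "achieves_formation a \<delta>"
  obtain y p q where equilibrium: "\<And>i. (\<Sum>j\<in>UNIV. a i j * (y i - y j)) = 0" and "y p \<noteq> y q"
    using nonconstant_equilibrium_if_no_spanning_tree[of a, OF nonneg no_tree] by blast
  define w :: "'n \<Rightarrow> real^3" where "w i = y i *\<^sub>R axis 1 1" for i
  have "(\<Sum>j\<in>UNIV. a i j *\<^sub>R (w i - w j)) = (\<Sum>j\<in>UNIV. a i j * (y i - y j)) *\<^sub>R axis 1 1" for i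
    by (simp add: w_def scaleR_sum_left algebra_simps)
  then have "(\<Sum>j\<in>UNIV. a i j *\<^sub>R (w i - w j)) = 0" for i using equilibrium by simp
  with \<delta> have sol: "closed_loop_solution a \<delta> (\<lambda>i t. dq_mult (qone, pure4 (w i)) (\<delta> i))"
    by (rule closed_loop_solution_translations)
  obtain L where L: "\<And>i. ((\<lambda>t. xc \<delta> (\<lambda>i t. dq_mult (qone, pure4 (w i)) (\<delta> i)) i t) \<longlongrightarrow> L) at_top"
    using formation sol unfolding achieves_formation_def by blast
  have "(qone, pure4 (w p)) = L" "(qone, pure4 (w q)) = L"
    using L[of p] L[of q] by (simp_all add: xc_dq_mult \<delta> tendsto_const_iff)
  then have "(qone, pure4 (w p)) = (qone, pure4 (w q))" by simp
  then have "w p $ 1 = w q $ 1" by (metis qim3_pure4 prod.inject)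
  then show False using \<open>y p \<noteq> y q\<close> by (simp add: w_def)
qed

theorem theorem10:
  fixes a :: "'n::finite \<Rightarrow> 'n \<Rightarrow> real"
    and \<delta> :: "'n \<Rightarrow> (real^4) \<times> (real^4)"
  assumes "\<And>i j. a i j \<ge> 0"
    and "\<And>i. a i i = 0"
    and "\<And>i. unit_dq (\<delta> i)"
  shows "achieves_formation a \<delta> \<longleftrightarrow> has_directed_spanning_tree a"
  \<comment> \<open>Self-loops do not affect the dynamics.\<close>
  using formation_if_spanning_tree[of a \<delta>] no_formation_if_no_spanning_tree[of a \<delta>] assms(1,3)
  by blast

end
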